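(* Let $A$ and $B$ be nontrivial commutative groups. (a) If $A$ is infinite, then $\operatorname{fdeg}(\delta_{0,b})=\infty$ for every $b\in B\setminus\{0\}$; in particular $\delta(A,B)=\infty$. (b) If there is no prime $p$ such that $A$ is a finite $p$-group and $B$ is a $p$-group, then there is $b\in B$ with $\operatorname{fdeg}(\delta_{0,b})=\infty$; in particular $\delta(A,B)=\infty$. (c) If for some prime $p$, $A$ is a finite $p$-group, say $A\cong\bigoplus_{i=1}^r \mathbb{Z}/p^{\alpha_i}\mathbb{Z}$ with $\alpha_1\ge\alpha_2\ge\dots\ge\alpha_r\ge 1$, and $B$ is a $p$-group of finite exponent $p^\beta$, then $$\delta(A,B)=\sum_{j=1}^r (p^{\alpha_j}-1)+(\beta-1)(p-1)p^{\alpha_1-1}.$$ (d) If for some prime $p$, $A$ is a finite $p$-group and $B$ is a $p$-group of infinite exponent, then every $f\in B^A$ has finite functional degree, but $\delta(A,B)=\infty$.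
   Context: For commutative groups $A,B$, $B^A$ denotes the commutative group (under pointwise addition) of all maps $A\to B$. For $a\in A$, the difference operator $\Delta_a:B^A\to B^A$ is $(\Delta_a f)(x)=f(x+a)-f(x)$. Let $\widetilde{\mathbb N}=\mathbb N\cup\{-\infty,\infty\}$ ($\mathbb N=\{0,1,2,\dots\}$), totally ordered with $-\infty$ least and $\infty$ greatest. The functional degree $\operatorname{fdeg}(f)\in\widetilde{\mathbb N}$ of $f\in B^A$ is: $-\infty$ if $f=0$; otherwise the least $n\in\mathbb N$ such that $\Delta_{a_1}\cdots\Delta_{a_{n+1}}f=0$ for all $a_1,\dots,a_{n+1}\in A$; and $\infty$ if no such $n$ exists. Define $\delta(A,B)=\sup\{\operatorname{fdeg}(f): f\in B^A\}$. For $a\in A$, $b\in B$, the delta function $\delta_{a,b}\in B^A$ is given by $\delta_{a,b}(a)=b$ and $\delta_{a,b}(x)=0$ for $x\ne a$. A $p$-group is a commutative group in which every element has order a power of $p$. *)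

theory Defs
  imports "HOL-Algebra.Elementary_Groups" "HOL-Algebra.Product_Groups"
          "HOL-Library.Extended_Real" "HOL-Computational_Algebra.Primes"
begin

definition nsmul :: "nat \<Rightarrow> 'a::ab_group_add \<Rightarrow> 'a" where
  "nsmul n x = (\<Sum>i<n. x)"

text \<open>Order of an element (0 if the element has infinite order).\<close>
definition elem_order :: "'a::ab_group_add \<Rightarrow> nat" where
  "elem_order x = (if \<exists>n>0. nsmul n x = 0 then (LEAST n. n > 0 \<and> nsmul n x = 0) else 0)"

definition is_p_group :: "nat \<Rightarrow> 'a::ab_group_add itself \<Rightarrow> bool" where
  "is_p_group p T \<longleftrightarrow> (\<forall>x::'a. \<exists>k. elem_order x = p ^ k)"

definition has_exponent :: "'a::ab_group_add itself \<Rightarrow> nat \<Rightarrow> bool" where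
  "has_exponent T n \<longleftrightarrow> n > 0 \<and> (\<forall>x::'a. nsmul n x = 0) \<and>
     (\<forall>m>0. (\<forall>x::'a. nsmul m x = 0) \<longrightarrow> n \<le> m)"

definition infinite_exponent :: "'a::ab_group_add itself \<Rightarrow> bool" where
  "infinite_exponent T \<longleftrightarrow> \<not> (\<exists>n>0. \<forall>x::'a. nsmul n x = 0)"

definition Delta :: "'a::ab_group_add \<Rightarrow> ('a \<Rightarrow> 'b::ab_group_add) \<Rightarrow> ('a \<Rightarrow> 'b)" where
  "Delta a f = (\<lambda>x. f (x + a) - f x)"

definition diffs_vanish :: "nat \<Rightarrow> ('a::ab_group_add \<Rightarrow> 'b::ab_group_add) \<Rightarrow> bool" where
  "diffs_vanish n f \<longleftrightarrow> (\<forall>as. length as = Suc n \<longrightarrow> foldr Delta as f = (\<lambda>_. 0))"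

text \<open>Functional degree, with values in {-inf} \<union> N \<union> {inf}, embedded in ereal.\<close>
definition fdeg :: "('a::ab_group_add \<Rightarrow> 'b::ab_group_add) \<Rightarrow> ereal" where
  "fdeg f = (if f = (\<lambda>_. 0) then -\<infinity>
             else if \<exists>n. diffs_vanish n f then ereal (real (LEAST n. diffs_vanish n f))
             else \<infinity>)"

definition delta_AB :: "'a::ab_group_add itself \<Rightarrow> 'b::ab_group_add itself \<Rightarrow> ereal" where
  "delta_AB TA TB = Sup (range (fdeg :: ('a \<Rightarrow> 'b) \<Rightarrow> ereal))"

definition delta_fun :: "'a \<Rightarrow> 'b::zero \<Rightarrow> 'a \<Rightarrow> 'b" where
  "delta_fun a b = (\<lambda>x. if x = a then b else 0)"

definition add_grp :: "'a::ab_group_add monoid" where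
  "add_grp = \<lparr>carrier = UNIV, monoid.mult = (+), one = 0\<rparr>"

end

theory Submission
  imports Defs
begin

text \<open>
  An iterated difference of a delta function is an alternating sum of its values on the
  subset sums of the directions.  If \<open>A\<close> is infinite these subset sums can be chosen
  pairwise distinct, so no iterated difference of \<open>\<delta>\<^sub>0\<^sub>,\<^sub>b\<close> vanishes.  If \<open>a \<in> A\<close> has order
  \<open>m\<close>, then \<open>\<Delta>\<^sub>a\<^sup>n\<^sup>+\<^sup>1 \<delta>\<^sub>0\<^sub>,\<^sub>b = 0\<close> forces \<open>m\<^sup>n b = 0\<close>, which settles the case where \<open>A\<close> and
  \<open>B\<close> are not \<open>p\<close>-groups for one prime \<open>p\<close>.

  For \<open>e\<close> of order \<open>N = p\<^sup>\<alpha>\<close>, the binomial expansion of \<open>0 = \<Delta>\<^sub>e\<^sup>N h + \<dots>\<close> writes \<open>\<Delta>\<^sub>e\<^sup>N\<close> as a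
  combination of lower powers \<open>\<Delta>\<^sub>e\<^sup>j\<close> with coefficients \<open>N choose j\<close>, all divisible by \<open>p\<close>.
  Tracking the weight \<open>s (p - 1) p\<^sup>\<alpha>\<^sup>-\<^sup>1 + i\<close> of a term \<open>p\<^sup>s \<Delta>\<^sub>e\<^sup>i h\<close> shows that every
  \<open>(p - 1) p\<^sup>\<alpha>\<^sup>-\<^sup>1\<close> further differences beyond \<open>N\<close> gain a factor \<open>p\<close>; this gives the upper
  bounds.  The term \<open>j = p\<^sup>\<alpha>\<^sup>-\<^sup>1\<close>, whose coefficient is divisible by \<open>p\<close> exactly once, is
  the one that survives, and it yields the matching lower bound.
\<close>

section \<open>Multiples and orders of elements\<close>

lemma nsmul_0[simp]: "nsmul 0 x = 0" by (simp add: nsmul_def)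
lemma nsmul_Suc: "nsmul (Suc n) x = x + nsmul n x" by (simp add: nsmul_def add.commute)
lemma nsmul_Suc0[simp]: "nsmul (Suc 0) x = x" by (simp add: nsmul_def)
lemma nsmul_add: "nsmul (m + n) x = nsmul m x + nsmul n x"
  by (induction m) (simp_all add: nsmul_Suc add.assoc)
lemma nsmul_mult: "nsmul (m * n) x = nsmul m (nsmul n x)"
  by (induction m) (simp_all add: nsmul_Suc nsmul_add)
lemma nsmul_zero[simp]: "nsmul n (0::'a::ab_group_add) = 0"
  by (induction n) (simp_all add: nsmul_Suc)
lemma nsmul_plus: "nsmul n (x + y) = nsmul n x + nsmul n (y::'a::ab_group_add)"
  by (induction n) (simp_all add: nsmul_Suc algebra_simps)
lemma nsmul_uminus: "nsmul n (- x) = - nsmul n (x::'a::ab_group_add)"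
proof -
  have "nsmul n x + nsmul n (- x) = 0" by (simp flip: nsmul_plus)
  thus ?thesis by (rule minus_unique[symmetric])
qed
lemma nsmul_minus: "nsmul n (x - y) = nsmul n x - nsmul n (y::'a::ab_group_add)"
  by (simp only: diff_conv_add_uminus nsmul_plus nsmul_uminus)
lemma nsmul_sum: "nsmul n (sum f S) = (\<Sum>i\<in>S. nsmul n (f i :: 'a::ab_group_add))"
  by (induction S rule: infinite_finite_induct) (simp_all add: nsmul_plus)
lemma sum_list_replicate_nsmul: "sum_list (replicate n x) = nsmul n x"
  by (induction n) (simp_all add: nsmul_Suc)
lemma nsmul_comm: "nsmul m (nsmul n x) = nsmul n (nsmul m x)"
  by (metis nsmul_mult mult.commute)

lemma elem_order_pos_iff: "elem_order x > 0 \<longleftrightarrow> (\<exists>n>0. nsmul n x = 0)"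
proof
  assume "elem_order x > 0"
  thus "\<exists>n>0. nsmul n x = 0" unfolding elem_order_def by (auto split: if_splits)
next
  assume h: "\<exists>n>0. nsmul n x = 0"
  hence "(LEAST n. n > 0 \<and> nsmul n x = 0) > 0" by (metis (mono_tags, lifting) LeastI)
  thus "elem_order x > 0" using h unfolding elem_order_def by simp
qed

lemma nsmul_elem_order: "nsmul (elem_order x) x = 0"
proof (cases "\<exists>n>0. nsmul n x = 0")
  case True
  hence "nsmul (LEAST n. n > 0 \<and> nsmul n x = 0) x = 0" by (metis (mono_tags, lifting) LeastI)
  thus ?thesis using True unfolding elem_order_def by simp
next
  case False thus ?thesis by (simp only: elem_order_def if_not_P[OF False] if_False nsmul_0)
qed

lemma nsmul_below_elem_order: "0 < n \<Longrightarrow> n < elem_order x \<Longrightarrow> nsmul n x \<noteq> 0"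
proof
  assume a: "0 < n" "n < elem_order x" "nsmul n x = 0"
  hence "\<exists>n>0. nsmul n x = 0" by blast
  hence "elem_order x = (LEAST n. n > 0 \<and> nsmul n x = 0)" by (simp only: elem_order_def if_P)
  moreover have "(LEAST n. n > 0 \<and> nsmul n x = 0) \<le> n" using a by (intro Least_le) simp
  ultimately show False using a by simp
qed

lemma nsmul_eq_0_iff_elem_order_dvd:
  assumes "elem_order x > 0" shows "nsmul n x = 0 \<longleftrightarrow> elem_order x dvd n"
proof -
  have "nsmul n x = nsmul (elem_order x * (n div elem_order x)) x + nsmul (n mod elem_order x) x"
    by (simp flip: nsmul_add)
  also have "nsmul (elem_order x * (n div elem_order x)) x = 0"
    by (metis mult.commute nsmul_mult nsmul_elem_order nsmul_zero)
  finally have "nsmul n x = nsmul (n mod elem_order x) x" by simp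
  moreover have "n mod elem_order x < elem_order x" using assms by simp
  ultimately show ?thesis
    using nsmul_below_elem_order[of "n mod elem_order x" x] by (auto simp: dvd_eq_mod_eq_0)
qed

lemma elem_order_dvd: "nsmul n x = 0 \<Longrightarrow> n > 0 \<Longrightarrow> elem_order x dvd n"
  using nsmul_eq_0_iff_elem_order_dvd elem_order_pos_iff by blast

lemma elem_order_eqI:
  assumes "n > 0" "nsmul n x = 0" "\<And>m. 0 < m \<Longrightarrow> m < n \<Longrightarrow> nsmul m x \<noteq> 0"
  shows "elem_order x = n"
proof -
  have "elem_order x dvd n" using assms elem_order_dvd by blast
  hence "elem_order x \<le> n" using assms by (simp add: dvd_imp_le)
  moreover have "elem_order x > 0" using assms elem_order_pos_iff by blast
  ultimately show ?thesis using assms(3)[of "elem_order x"] nsmul_elem_order by force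
qed

lemma elem_order_eq_1_iff: "elem_order x = 1 \<longleftrightarrow> x = 0"
proof
  assume "elem_order x = 1" thus "x = 0" using nsmul_elem_order[of x] by simp
qed (auto intro: elem_order_eqI)

lemma elem_order_pos_if_finite:
  assumes "finite (UNIV :: 'a set)" shows "elem_order (x::'a::ab_group_add) > 0"
proof -
  have "\<not> inj (\<lambda>n::nat. nsmul n x)"
  proof
    assume "inj (\<lambda>n::nat. nsmul n x)"
    moreover have "finite (range (\<lambda>n::nat. nsmul n x))" using assms by (rule finite_subset[rotated]) simp
    ultimately show False using finite_imageD by blast
  qed
  then obtain i j where ij: "i < j" "nsmul i x = nsmul j x"
    unfolding inj_def by (metis linorder_neqE_nat)
  have "nsmul j x = nsmul (j - i) x + nsmul i x" using ij(1) by (simp flip: nsmul_add)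
  hence "nsmul (j - i) x = 0" using ij(2) by simp
  moreover have "j - i > 0" using ij(1) by simp
  ultimately show ?thesis using elem_order_pos_iff by blast
qed

lemma elem_order_nsmul_div:
  assumes ord: "elem_order a = m" "m > 0" and q: "q dvd m" "q > 0"
  shows "elem_order (nsmul (m div q) a) = q"
proof (rule elem_order_eqI)
  have "nsmul q (nsmul (m div q) a) = nsmul m a" using q by (simp add: nsmul_mult[symmetric])
  thus "nsmul q (nsmul (m div q) a) = 0" using ord nsmul_elem_order by metis
  fix j assume j: "0 < j" "j < q"
  have "j * (m div q) < m"
    using j q ord mult_strict_right_mono[of j q "m div q"] by (auto simp: dvd_div_eq_0_iff)
  moreover have "0 < j * (m div q)" using j q ord by (auto simp: dvd_div_eq_0_iff)
  ultimately show "nsmul j (nsmul (m div q) a) \<noteq> 0"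
    using nsmul_below_elem_order ord by (metis nsmul_mult)
qed (use q in simp)

lemma is_p_groupD: "is_p_group p TYPE('a::ab_group_add) \<Longrightarrow> \<exists>k. elem_order (x::'a) = p ^ k"
  by (simp add: is_p_group_def)

lemma nsmul_ne_0_if_coprime:
  assumes p: "prime p" and "is_p_group p TYPE('a::ab_group_add)"
    and y: "(y::'a) \<noteq> 0" and n: "\<not> p dvd n"
  shows "nsmul n y \<noteq> 0"
proof
  assume ny: "nsmul n y = 0"
  obtain k where k: "elem_order y = p ^ k" using assms is_p_groupD by blast
  have "k \<noteq> 0" using k y elem_order_eq_1_iff by fastforce
  hence "p dvd elem_order y" using k by simp
  moreover have "elem_order y > 0" using k prime_gt_0_nat[OF p] by simp
  hence "elem_order y dvd n" using ny nsmul_eq_0_iff_elem_order_dvd by blast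
  ultimately show False using n dvd_trans by blast
qed

definition nsmul_fun :: "nat \<Rightarrow> ('a \<Rightarrow> 'b::ab_group_add) \<Rightarrow> 'a \<Rightarrow> 'b" where
  "nsmul_fun n g = (\<lambda>x. nsmul n (g x))"

lemma nsmul_fun_mult: "nsmul_fun (m * n) g = nsmul_fun m (nsmul_fun n g)"
  by (simp add: nsmul_fun_def nsmul_mult)
lemma nsmul_fun_Suc0[simp]: "nsmul_fun (Suc 0) g = g" by (simp add: nsmul_fun_def)
lemma nsmul_fun_zero[simp]: "nsmul_fun n (\<lambda>_. 0::'b::ab_group_add) = (\<lambda>_. 0)"
  by (simp add: nsmul_fun_def)
lemma nsmul_fun_plus: "nsmul_fun n (\<lambda>x. G1 x + G2 x) = (\<lambda>x. nsmul_fun n G1 x + nsmul_fun n G2 x)"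
  by (simp add: nsmul_fun_def nsmul_plus)

section \<open>Difference operators\<close>

lemma Delta_apply: "Delta a f x = f (x + a) - f x" by (simp add: Delta_def)

lemma Delta_plus: "Delta a (\<lambda>x. f x + g x) = (\<lambda>x. Delta a f x + Delta a g x)"
  by (simp add: fun_eq_iff Delta_def algebra_simps)
lemma Delta_uminus: "Delta a (\<lambda>x. - f x) = (\<lambda>x. - Delta a f x)"
  by (simp add: fun_eq_iff Delta_def algebra_simps)
lemma Delta_zero[simp]: "Delta a (\<lambda>x. 0) = (\<lambda>x. 0)"
  by (simp add: fun_eq_iff Delta_def)
lemma Delta_nsmul_fun: "Delta a (nsmul_fun n f) = nsmul_fun n (Delta a f)"
  by (simp add: fun_eq_iff Delta_def nsmul_fun_def nsmul_minus)
lemma Delta_sum: "Delta a (\<lambda>x. \<Sum>i\<in>S. F i x) = (\<lambda>x. \<Sum>i\<in>S. Delta a (F i) x)"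
  by (simp add: fun_eq_iff Delta_def sum_subtractf)
lemma Delta_commute: "Delta a (Delta b f) = Delta b (Delta a f)"
  by (simp add: fun_eq_iff Delta_def algebra_simps)
lemma Delta_add_dir: "Delta (a + b) f = (\<lambda>x. Delta a f x + Delta b f x + Delta a (Delta b f) x)"
  by (simp add: fun_eq_iff Delta_def algebra_simps)
lemma Delta_0_dir: "Delta 0 f = (\<lambda>x. 0)"
  by (simp add: fun_eq_iff Delta_def)

lemma Deltan_plus: "(Delta a ^^ n) (\<lambda>x. f x + g x) = (\<lambda>x. (Delta a ^^ n) f x + (Delta a ^^ n) g x)"
  by (induction n) (simp_all add: Delta_plus)
lemma Deltan_uminus: "(Delta a ^^ n) (\<lambda>x. - f x) = (\<lambda>x. - (Delta a ^^ n) f x)"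
  by (induction n) (simp_all add: Delta_uminus)
lemma Deltan_zero[simp]: "(Delta a ^^ n) (\<lambda>x. 0) = (\<lambda>x. 0)"
  by (induction n) simp_all
lemma Deltan_nsmul_fun: "(Delta a ^^ n) (nsmul_fun m f) = nsmul_fun m ((Delta a ^^ n) f)"
  by (induction n) (simp_all add: Delta_nsmul_fun)
lemma Deltan_sum: "(Delta a ^^ n) (\<lambda>x. \<Sum>i\<in>S. F i x) = (\<lambda>x. \<Sum>i\<in>S. (Delta a ^^ n) (F i) x)"
  by (induction n) (simp_all add: Delta_sum)
lemma Deltan_Delta_commute: "(Delta a ^^ n) (Delta b f) = Delta b ((Delta a ^^ n) f)"
  by (induction n) (simp_all add: Delta_commute)
lemma Deltan_commute: "(Delta a ^^ m) ((Delta b ^^ n) f) = (Delta b ^^ n) ((Delta a ^^ m) f)"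
  by (induction n) (simp_all add: Deltan_Delta_commute)

lemma foldr_replicate_Delta: "foldr Delta (replicate n a) f = (Delta a ^^ n) f"
  by (induction n) simp_all
lemma foldr_Delta_Delta_commute: "foldr Delta as (Delta b f) = Delta b (foldr Delta as f)"
  by (induction as) (simp_all add: Delta_commute)
lemma foldr_Delta_commute: "foldr Delta as (foldr Delta bs f) = foldr Delta bs (foldr Delta as f)"
  by (induction bs) (simp_all add: foldr_Delta_Delta_commute)

lemma foldr_Delta_zero[simp]: "foldr Delta as (\<lambda>x. 0) = (\<lambda>x. 0)"
  by (induction as) simp_all

lemma sum_Delta_multiples: "(\<Sum>j<m. Delta a g (x + nsmul j a)) = g (x + nsmul m a) - g x"
proof -
  have "(\<Sum>j<m. Delta a g (x + nsmul j a)) = (\<Sum>j<m. g (x + nsmul (Suc j) a) - g (x + nsmul j a))"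
    by (intro sum.cong) (simp_all add: Delta_apply nsmul_Suc algebra_simps)
  also have "\<dots> = g (x + nsmul m a) - g x"
    using sum_lessThan_telescope[where f = "\<lambda>j. g (x + nsmul j a)"] by simp
  finally show ?thesis .
qed

lemma Delta_eq_0_imp_periodic: "Delta a g = (\<lambda>_. 0) \<Longrightarrow> g (x + nsmul j a) = g x"
  using sum_Delta_multiples[where m = j and a = a and g = g and x = x] by simp

lemma sum_choose_Suc:
  fixes f :: "nat \<Rightarrow> 'b::ab_group_add"
  shows "(\<Sum>j\<le>Suc n. nsmul (Suc n choose j) (f j)) =
         (\<Sum>j\<le>n. nsmul (n choose j) (f j)) + (\<Sum>j\<le>n. nsmul (n choose j) (f (Suc j)))"
proof -
  have "(\<Sum>j\<le>Suc n. nsmul (Suc n choose j) (f j)) =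
        nsmul (Suc n choose 0) (f 0) + (\<Sum>j\<le>n. nsmul (Suc n choose Suc j) (f (Suc j)))"
    by (rule sum.atMost_Suc_shift)
  also have "(\<Sum>j\<le>n. nsmul (Suc n choose Suc j) (f (Suc j))) =
        (\<Sum>j\<le>n. nsmul (n choose j) (f (Suc j))) + (\<Sum>j\<le>n. nsmul (n choose Suc j) (f (Suc j)))"
    by (simp add: nsmul_add sum.distrib)
  also have "(\<Sum>j\<le>n. nsmul (n choose Suc j) (f (Suc j))) = (\<Sum>j<n. nsmul (n choose Suc j) (f (Suc j)))"
    by (simp add: lessThan_Suc_atMost[symmetric] binomial_eq_0)
  also have "nsmul (n choose 0) (f 0) + (\<Sum>j<n. nsmul (n choose Suc j) (f (Suc j))) = (\<Sum>j\<le>n. nsmul (n choose j) (f j))"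
  proof (cases n)
    case 0 thus ?thesis by simp
  next
    case (Suc m)
    have "(\<Sum>j\<le>n. nsmul (n choose j) (f j)) = nsmul (n choose 0) (f 0) + (\<Sum>j\<le>m. nsmul (n choose Suc j) (f (Suc j)))"
      unfolding Suc by (rule sum.atMost_Suc_shift)
    thus ?thesis using Suc by (simp add: lessThan_Suc_atMost)
  qed
  ultimately show ?thesis by (simp add: ac_simps)
qed

lemma sum_choose_Deltan:
  "(\<Sum>j\<le>n. nsmul (n choose j) ((Delta e ^^ j) h x)) = h (x + nsmul n e)"
proof (induction n arbitrary: x)
  case (Suc n)
  let ?F = "\<lambda>j. (Delta e ^^ j) h x"
  have "(\<Sum>j\<le>Suc n. nsmul (Suc n choose j) (?F j)) =
        (\<Sum>j\<le>n. nsmul (n choose j) (?F j)) + (\<Sum>j\<le>n. nsmul (n choose j) (?F (Suc j)))"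
    by (rule sum_choose_Suc)
  also have "(\<Sum>j\<le>n. nsmul (n choose j) (?F (Suc j))) =
        (\<Sum>j\<le>n. nsmul (n choose j) ((Delta e ^^ j) h (x + e))) - (\<Sum>j\<le>n. nsmul (n choose j) (?F j))"
    by (simp add: Delta_apply nsmul_minus sum_subtractf)
  finally show ?case using Suc.IH by (simp add: nsmul_Suc ac_simps)
qed simp

lemma Deltan_elem_order_expansion:
  assumes e_killed: "nsmul N e = 0" and N: "N > 0"
  shows "(Delta e ^^ N) h = (\<lambda>x. \<Sum>j\<in>{1..<N}. nsmul (N choose j) ((Delta e ^^ j) (\<lambda>y. - h y) x))"
proof
  fix x
  have "h x = (\<Sum>j\<le>N. nsmul (N choose j) ((Delta e ^^ j) h x))" using sum_choose_Deltan[of N e h x] e_killed by simp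
  also have "{..N} = insert 0 (insert N {1..<N})" using N by auto
  also have "(\<Sum>j\<in>insert 0 (insert N {1..<N}). nsmul (N choose j) ((Delta e ^^ j) h x)) =
     h x + ((Delta e ^^ N) h x + (\<Sum>j\<in>{1..<N}. nsmul (N choose j) ((Delta e ^^ j) h x)))"
    using N by (simp add: sum.insert)
  finally have "(Delta e ^^ N) h x = - (\<Sum>j\<in>{1..<N}. nsmul (N choose j) ((Delta e ^^ j) h x))"
    by (simp add: eq_neg_iff_add_eq_0)
  also have "\<dots> = (\<Sum>j\<in>{1..<N}. nsmul (N choose j) ((Delta e ^^ j) (\<lambda>y. - h y) x))"
    by (simp add: Deltan_uminus nsmul_uminus sum_negf)
  finally show "(Delta e ^^ N) h x = (\<Sum>j\<in>{1..<N}. nsmul (N choose j) ((Delta e ^^ j) (\<lambda>y. - h y) x))" .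
qed

section \<open>Functional degree\<close>

lemma diffs_vanish_Suc: "diffs_vanish n f \<Longrightarrow> diffs_vanish (Suc n) f"
  unfolding diffs_vanish_def
proof (intro allI impI)
  fix as :: "'a list"
  assume "\<forall>as. length as = Suc n \<longrightarrow> foldr Delta as f = (\<lambda>_. 0)" and "length as = Suc (Suc n)"
  thus "foldr Delta as f = (\<lambda>_. 0)" by (cases as) auto
qed

lemma diffs_vanish_mono: assumes "diffs_vanish n f" "n \<le> m" shows "diffs_vanish m f"
  using assms(2) by (induction m rule: dec_induct) (auto intro: diffs_vanish_Suc assms(1))

lemma not_diffs_vanishI:
  "length as = Suc n \<Longrightarrow> foldr Delta as f x \<noteq> 0 \<Longrightarrow> \<not> diffs_vanish n f"
  unfolding diffs_vanish_def by (auto simp: fun_eq_iff)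

lemma Suc_le_fdeg: "\<not> diffs_vanish n f \<Longrightarrow> ereal (real (Suc n)) \<le> fdeg f"
proof -
  assume nv: "\<not> diffs_vanish n f"
  have nz: "f \<noteq> (\<lambda>_. 0)" using nv by (auto simp: diffs_vanish_def)
  show ?thesis
  proof (cases "\<exists>m. diffs_vanish m f")
    case True
    have "diffs_vanish (LEAST m. diffs_vanish m f) f" using True by (rule LeastI_ex)
    hence "Suc n \<le> (LEAST m. diffs_vanish m f)"
      using nv diffs_vanish_mono not_less_eq_eq by blast
    thus ?thesis using True nz by (simp add: fdeg_def)
  qed (simp add: fdeg_def nz)
qed

lemma fdeg_le: "diffs_vanish n f \<Longrightarrow> fdeg f \<le> ereal (real n)"
  unfolding fdeg_def by (auto intro: Least_le)

lemma fdeg_infinite: "(\<And>n. \<not> diffs_vanish n f) \<Longrightarrow> fdeg f = \<infinity>"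
  unfolding fdeg_def by (auto simp: diffs_vanish_def)

lemma delta_AB_infinite:
  "(\<And>n. \<exists>f::'a::ab_group_add \<Rightarrow> 'b::ab_group_add. \<not> diffs_vanish n f) \<Longrightarrow>
   delta_AB TYPE('a) TYPE('b) = \<infinity>"
proof (unfold delta_AB_def, rule ereal_top)
  fix B :: real assume h: "\<And>n. \<exists>f::'a \<Rightarrow> 'b. \<not> diffs_vanish n f"
  obtain n :: nat where n: "B \<le> real n" using real_arch_simple by blast
  obtain f :: "'a \<Rightarrow> 'b" where "\<not> diffs_vanish n f" using h by blast
  hence "ereal (real (Suc n)) \<le> fdeg f" by (rule Suc_le_fdeg)
  moreover have "ereal B \<le> ereal (real (Suc n))" using n by simp
  ultimately have "ereal B \<le> fdeg f" by (rule order_trans[rotated])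
  also have "\<dots> \<le> Sup (range (fdeg :: ('a \<Rightarrow> 'b) \<Rightarrow> ereal))" by (rule Sup_upper) simp
  finally show "ereal B \<le> Sup (range (fdeg :: ('a \<Rightarrow> 'b) \<Rightarrow> ereal))" .
qed

lemma delta_AB_infinite_if_fdeg:
  "fdeg (f::'a::ab_group_add \<Rightarrow> 'b::ab_group_add) = \<infinity> \<Longrightarrow> delta_AB TYPE('a) TYPE('b) = \<infinity>"
proof -
  assume "fdeg f = \<infinity>"
  hence "\<infinity> \<le> Sup (range (fdeg :: ('a \<Rightarrow> 'b) \<Rightarrow> ereal))" by (metis Sup_upper rangeI)
  thus ?thesis by (simp add: delta_AB_def top_unique[unfolded top_ereal_def])
qed

lemma delta_AB_eqI:
  assumes "\<And>f::'a::ab_group_add \<Rightarrow> 'b::ab_group_add. diffs_vanish n f"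
    and "\<not> diffs_vanish (n - 1) (g::'a \<Rightarrow> 'b)" and "n > 0"
  shows "delta_AB TYPE('a) TYPE('b) = ereal (real n)"
proof (unfold delta_AB_def, rule antisym)
  show "Sup (range (fdeg :: ('a \<Rightarrow> 'b) \<Rightarrow> ereal)) \<le> ereal (real n)"
    by (rule Sup_least) (auto intro: fdeg_le assms(1))
  have "ereal (real n) \<le> fdeg g" using Suc_le_fdeg[OF assms(2)] assms(3) by simp
  also have "\<dots> \<le> Sup (range (fdeg :: ('a \<Rightarrow> 'b) \<Rightarrow> ereal))" by (rule Sup_upper) simp
  finally show "ereal (real n) \<le> Sup (range (fdeg :: ('a \<Rightarrow> 'b) \<Rightarrow> ereal))" .
qed

lemma fdeg_less_infinity: "diffs_vanish n f \<Longrightarrow> fdeg f < \<infinity>"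
  using fdeg_le[of n f] by (auto simp: less_le)

section \<open>Iterated differences of delta functions\<close>

lemma length_subseqs_le: "ys \<in> set (subseqs as) \<Longrightarrow> length ys \<le> length as"
proof (induction as arbitrary: ys)
  case (Cons a as) thus ?case by (fastforce simp: Let_def)
qed simp

lemma subseqs_replicate: "ys \<in> set (subseqs (replicate n e)) \<Longrightarrow> \<exists>c\<le>n. ys = replicate c e"
proof (induction n arbitrary: ys)
  case (Suc n)
  hence "ys \<in> (Cons e) ` set (subseqs (replicate n e)) \<or> ys \<in> set (subseqs (replicate n e))"
    by (simp add: Let_def)
  thus ?case
  proof
    assume "ys \<in> (Cons e) ` set (subseqs (replicate n e))"
    then obtain zs where "zs \<in> set (subseqs (replicate n e))" "ys = e # zs" by blast
    thus ?thesis using Suc.IH by (metis Suc_le_mono replicate_Suc)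
  qed (use Suc.IH le_SucI in blast)
qed simp

text \<open>
  Both lemmas below are instances of the expansion of \<open>foldr Delta as g x\<close> as the
  alternating sum of \<open>g (x + sum_list ys)\<close> over the subsequences \<open>ys\<close> of \<open>as\<close>.
\<close>

lemma foldr_Delta_eq_0I:
  "(\<forall>ys\<in>set (subseqs as). g (x + sum_list ys) = 0) \<Longrightarrow> foldr Delta as g x = 0"
proof (induction as arbitrary: x)
  case (Cons a as)
  have "foldr Delta as g (x + a) = 0"
  proof (rule Cons.IH, rule ballI)
    fix ys assume "ys \<in> set (subseqs as)"
    hence "a # ys \<in> set (subseqs (a # as))" by (simp add: Let_def)
    hence "g (x + sum_list (a # ys)) = 0" using Cons.prems by blast
    thus "g (x + a + sum_list ys) = 0" by (simp add: add.assoc)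
  qed
  moreover have "foldr Delta as g x = 0"
    using Cons.prems by (intro Cons.IH) (auto simp: Let_def)
  moreover have "foldr Delta (a # as) g x = foldr Delta as g (x + a) - foldr Delta as g x"
    by (simp only: foldr_Cons o_apply Delta_apply)
  ultimately show ?case by simp
qed simp

lemma foldr_Delta_eq_full_term:
  "(\<forall>ys\<in>set (subseqs as). ys \<noteq> as \<longrightarrow> g (x + sum_list ys) = 0) \<Longrightarrow>
   foldr Delta as g x = g (x + sum_list as)"
proof (induction as arbitrary: x)
  case (Cons a as)
  have "foldr Delta as g (x + a) = g (x + a + sum_list as)"
  proof (rule Cons.IH, intro ballI impI)
    fix ys assume "ys \<in> set (subseqs as)" "ys \<noteq> as"
    hence "a # ys \<in> set (subseqs (a # as))" "a # ys \<noteq> a # as" by (simp_all add: Let_def)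
    hence "g (x + sum_list (a # ys)) = 0" using Cons.prems by blast
    thus "g (x + a + sum_list ys) = 0" by (simp add: add.assoc)
  qed
  moreover have "foldr Delta as g x = 0"
  proof (rule foldr_Delta_eq_0I, rule ballI)
    fix ys assume ys: "ys \<in> set (subseqs as)"
    hence "ys \<noteq> a # as" using length_subseqs_le by fastforce
    thus "g (x + sum_list ys) = 0" using Cons.prems ys by (simp add: Let_def)
  qed
  moreover have "foldr Delta (a # as) g x = foldr Delta as g (x + a) - foldr Delta as g x"
    by (simp only: foldr_Cons o_apply Delta_apply)
  ultimately show ?case by (simp add: add.assoc)
qed simp

lemma Deltan_delta_fun_at_dir:
  assumes ord: "elem_order e = N" and N: "N > 0" and i: "i < N"
  shows "(Delta e ^^ i) (delta_fun 0 b) e = (if i = N - 1 then b else 0)"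
proof -
  have key: "e + sum_list (replicate c e) = 0 \<longleftrightarrow> c = N - 1" if "c \<le> i" for c
  proof -
    have eq: "e + sum_list (replicate c e) = nsmul (Suc c) e"
      by (simp add: sum_list_replicate_nsmul nsmul_Suc)
    show ?thesis
    proof (cases "Suc c < N")
      case True
      thus ?thesis using nsmul_below_elem_order[of "Suc c" e] ord eq by simp
    next
      case False
      hence "Suc c = N" using that i by simp
      moreover have "nsmul N e = 0" using ord nsmul_elem_order by blast
      ultimately show ?thesis using eq by force
    qed
  qed
  have vanish: "delta_fun 0 b (e + sum_list ys) = 0"
    if ys: "ys \<in> set (subseqs (replicate i e))" "ys \<noteq> replicate (N - 1) e" for ys
  proof -
    obtain c where c: "c \<le> i" "ys = replicate c e" using subseqs_replicate[OF ys(1)] by blast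
    hence "e + sum_list ys \<noteq> 0" using key[OF c(1)] ys(2) by blast
    thus ?thesis by (simp add: delta_fun_def)
  qed
  show ?thesis
  proof (cases "i = N - 1")
    case True
    hence "foldr Delta (replicate i e) (delta_fun 0 b) e = delta_fun 0 b (e + sum_list (replicate i e))"
      using vanish by (intro foldr_Delta_eq_full_term) blast
    also have "\<dots> = b" using True key[of i] by (simp add: delta_fun_def)
    finally show ?thesis using True by (simp add: foldr_replicate_Delta)
  next
    case False
    have "ys \<noteq> replicate (N - 1) e" if "ys \<in> set (subseqs (replicate i e))" for ys
      using length_subseqs_le[OF that] False i by auto
    hence "foldr Delta (replicate i e) (delta_fun 0 b) e = 0"
      using vanish by (intro foldr_Delta_eq_0I) blast
    thus ?thesis using False by (simp add: foldr_replicate_Delta)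
  qed
qed

section \<open>Infinite groups\<close>

lemma exists_list_proper_subseq_sums_ne:
  assumes "infinite (UNIV :: 'a::ab_group_add set)"
  shows "\<exists>as::'a list. length as = n \<and> (\<forall>ys\<in>set (subseqs as). ys \<noteq> as \<longrightarrow> sum_list ys \<noteq> sum_list as)"
proof (induction n)
  case (Suc n)
  then obtain as :: "'a list" where l: "length as = n"
    and as: "\<forall>ys\<in>set (subseqs as). ys \<noteq> as \<longrightarrow> sum_list ys \<noteq> sum_list as" by blast
  have "finite ((\<lambda>ys. sum_list ys - sum_list as) ` set (subseqs as))" by simp
  then obtain a where a: "a \<notin> (\<lambda>ys. sum_list ys - sum_list as) ` set (subseqs as)"
    using ex_new_if_finite[OF assms] by blast
  have "sum_list ys \<noteq> sum_list (a # as)" if "ys \<in> set (subseqs (a # as))" "ys \<noteq> a # as" for ys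
  proof -
    have "ys \<in> (Cons a) ` set (subseqs as) \<or> ys \<in> set (subseqs as)" using that by (simp add: Let_def)
    thus ?thesis
    proof
      assume "ys \<in> (Cons a) ` set (subseqs as)"
      thus ?thesis using as that(2) by auto
    next
      assume "ys \<in> set (subseqs as)"
      hence "a \<noteq> sum_list ys - sum_list as" using a by blast
      thus ?thesis by (auto simp: algebra_simps)
    qed
  qed
  thus ?case using l by (intro exI[of _ "a # as"]) simp
qed simp

lemma fdeg_delta_fun_infinite_if_infinite:
  assumes "infinite (UNIV :: 'a::ab_group_add set)" and b: "(b::'b::ab_group_add) \<noteq> 0"
  shows "fdeg (delta_fun (0::'a) b) = \<infinity>"
proof (rule fdeg_infinite)
  fix n
  obtain as :: "'a list" where l: "length as = Suc n"
    and as: "\<forall>ys\<in>set (subseqs as). ys \<noteq> as \<longrightarrow> sum_list ys \<noteq> sum_list as"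
    using exists_list_proper_subseq_sums_ne[OF assms(1)] by blast
  have "foldr Delta as (delta_fun 0 b) (- sum_list as) = delta_fun 0 b (- sum_list as + sum_list as)"
    using as by (intro foldr_Delta_eq_full_term) (auto simp: delta_fun_def)
  also have "\<dots> \<noteq> 0" using b by (simp add: delta_fun_def)
  finally show "\<not> diffs_vanish n (delta_fun (0::'a) b)" using l by (intro not_diffs_vanishI)
qed

section \<open>Groups that are not \<open>p\<close>-groups for a common prime\<close>

lemma nsmul_power_mean_deviation_eq_0:
  assumes m: "nsmul m a = 0" and k: "k \<ge> 1" and van: "(Delta a ^^ k) g = (\<lambda>_. 0)"
  shows "nsmul (m ^ (k - 1)) (nsmul m (g x) - (\<Sum>j<m. g (x + nsmul j a))) = 0"
  using k van
proof (induction k arbitrary: g x rule: dec_induct)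
  case base
  hence "(\<Sum>j<m. g (x + nsmul j a)) = (\<Sum>j<m. g x)"
    by (intro sum.cong) (simp_all add: Delta_eq_0_imp_periodic)
  thus ?case by (simp add: nsmul_def)
next
  case (step k)
  have "(Delta a ^^ k) (Delta a g) = (\<lambda>_. 0)"
    using step.prems by (simp add: funpow_Suc_right del: funpow.simps)
  hence "nsmul (m ^ (k - 1)) (nsmul m (Delta a g x)) = 0" for x
    using step.IH[of "Delta a g" x] by (simp add: sum_Delta_multiples m)
  hence "nsmul (m ^ k) (Delta a g x) = 0" for x
    using step.hyps by (simp add: nsmul_mult[symmetric] power_eq_if mult.commute)
  hence "nsmul_fun (m ^ k) (Delta a g) = (\<lambda>_. 0)" by (simp add: nsmul_fun_def)
  hence "Delta a (nsmul_fun (m ^ k) g) = (\<lambda>_. 0)" by (simp only: Delta_nsmul_fun)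
  hence inv: "nsmul (m ^ k) (g (x + nsmul j a)) = nsmul (m ^ k) (g x)" for j
    using Delta_eq_0_imp_periodic[of a "nsmul_fun (m ^ k) g"] by (simp add: nsmul_fun_def)
  have "nsmul (m ^ (Suc k - 1)) (nsmul m (g x) - (\<Sum>j<m. g (x + nsmul j a)))
      = nsmul m (nsmul (m ^ k) (g x)) - (\<Sum>j<m. nsmul (m ^ k) (g (x + nsmul j a)))"
    by (simp add: nsmul_minus nsmul_sum nsmul_comm)
  also have "\<dots> = nsmul m (nsmul (m ^ k) (g x)) - (\<Sum>j<m. nsmul (m ^ k) (g x))" by (simp only: inv)
  also have "\<dots> = 0" by (simp add: nsmul_def)
  finally show ?case .
qed

lemma nsmul_order_power_eq_0_if_Deltan_delta_fun:
  assumes ord: "elem_order a = m" and m2: "m \<ge> 2"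
    and van: "(Delta a ^^ Suc n) (delta_fun 0 b) = (\<lambda>_. 0)"
  shows "nsmul (m ^ n) b = 0"
proof -
  have ma: "nsmul m a = 0" using ord nsmul_elem_order by blast
  have a0: "a \<noteq> 0"
  proof
    assume "a = 0" hence "elem_order a = 1" using elem_order_eq_1_iff by blast
    thus False using ord m2 by simp
  qed
  have "a + nsmul j a = 0 \<longleftrightarrow> j = m - 1" if j: "j < m" for j
  proof
    assume "a + nsmul j a = 0"
    hence "nsmul (Suc j) a = 0" by (simp add: nsmul_Suc)
    thus "j = m - 1" using nsmul_below_elem_order[of "Suc j" a] ord j by (cases "Suc j < m") auto
  next
    assume "j = m - 1" thus "a + nsmul j a = 0" using ma m2 by (simp flip: nsmul_Suc)
  qed
  hence "(\<Sum>j<m. delta_fun 0 b (a + nsmul j a)) = (\<Sum>j<m. if j = m - 1 then b else 0)"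
    by (intro sum.cong) (auto simp: delta_fun_def)
  also have "\<dots> = b" using m2 by (subst sum.delta) auto
  finally have "nsmul (m ^ n) (nsmul m (delta_fun 0 b a) - b) = 0"
    using nsmul_power_mean_deviation_eq_0[OF ma _ van, of a] by simp
  thus ?thesis using a0 by (simp add: delta_fun_def nsmul_uminus)
qed

lemma fdeg_delta_fun_infinite_if_powers_ne_0:
  assumes "elem_order (a::'a::ab_group_add) \<ge> 2"
    and "\<And>k. nsmul (elem_order a ^ k) (b::'b::ab_group_add) \<noteq> 0"
  shows "fdeg (delta_fun (0::'a) b) = \<infinity>"
proof (rule fdeg_infinite)
  fix n
  show "\<not> diffs_vanish n (delta_fun (0::'a) b)"
  proof
    assume "diffs_vanish n (delta_fun (0::'a) b)"
    hence "foldr Delta (replicate (Suc n) a) (delta_fun 0 b) = (\<lambda>_. 0)"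
      unfolding diffs_vanish_def by (simp only: length_replicate simp_thms)
    hence "(Delta a ^^ Suc n) (delta_fun 0 b) = (\<lambda>_. 0)" by (simp only: foldr_replicate_Delta)
    thus False using nsmul_order_power_eq_0_if_Deltan_delta_fun[OF refl assms(1)] assms(2) by blast
  qed
qed

lemma prime_power_if_prime_divisors_eq:
  assumes p: "prime (p::nat)" and n: "n > 0" and h: "\<And>q. prime q \<Longrightarrow> q dvd n \<Longrightarrow> q = p"
  shows "\<exists>k. n = p ^ k"
proof -
  have "\<not> is_unit p" using prime_gt_1_nat[OF p] by simp
  then obtain y where y: "n = p ^ multiplicity p n * y" "\<not> p dvd y"
    using multiplicity_decompose'[of n p] n by auto
  have "y = 1"
  proof (rule ccontr)
    assume "y \<noteq> 1"
    then obtain q where q: "prime q" "q dvd y" using prime_factor_nat by blast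
    hence "q = p" using h y(1) by (metis dvd_mult)
    thus False using q y by simp
  qed
  thus ?thesis using y by auto
qed

lemma common_prime_if_order_powers_annihilate:
  assumes fin: "finite (UNIV :: 'a::ab_group_add set)"
    and ntA: "\<exists>a::'a. a \<noteq> 0" and ntB: "\<exists>b::'b::ab_group_add. b \<noteq> 0"
    and H: "\<And>(a::'a) (b::'b). elem_order a \<ge> 2 \<Longrightarrow> \<exists>k. nsmul (elem_order a ^ k) b = 0"
  shows "\<exists>p. prime p \<and> is_p_group p TYPE('a) \<and> is_p_group p TYPE('b)"
proof -
  have pos: "elem_order a > 0" for a :: 'a using elem_order_pos_if_finite[OF fin] .
  have ge2: "elem_order a \<ge> 2" if "a \<noteq> 0" for a :: 'a
    using pos[of a] that elem_order_eq_1_iff[of a] by linarith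
  obtain a0 :: 'a where a0: "a0 \<noteq> 0" using ntA by blast
  obtain b0 :: 'b where b0: "b0 \<noteq> 0" using ntB by blast
  obtain k0 where "nsmul (elem_order a0 ^ k0) b0 = 0" using H ge2[OF a0] by blast
  hence "elem_order b0 > 0" using pos[of a0] elem_order_pos_iff by (metis zero_less_power)
  moreover have "elem_order b0 \<noteq> 1" using b0 elem_order_eq_1_iff by blast
  ultimately obtain p where p: "prime p" "p dvd elem_order b0" using prime_factor_nat by blast
  have only_p: "elem_order a = p" if q: "prime (elem_order a)" for a :: 'a
  proof -
    obtain k where "nsmul (elem_order a ^ k) b0 = 0" using H q prime_ge_2_nat by blast
    moreover have "elem_order a ^ k > 0" using q prime_gt_0_nat by simp
    ultimately have "elem_order b0 dvd elem_order a ^ k" using elem_order_dvd by blast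
    hence "p dvd elem_order a" using p prime_dvd_power dvd_trans by blast
    thus ?thesis using primes_dvd_imp_eq p(1) q by blast
  qed
  have pA: "\<exists>k. elem_order a = p ^ k" for a :: 'a
  proof (rule prime_power_if_prime_divisors_eq[OF p(1) pos])
    fix q assume q: "prime q" "q dvd elem_order a"
    hence "elem_order (nsmul (elem_order a div q) a) = q"
      using pos[of a] prime_gt_0_nat by (intro elem_order_nsmul_div) auto
    thus "q = p" using only_p q(1) by metis
  qed
  have pB: "\<exists>k. elem_order b = p ^ k" for b :: 'b
  proof -
    obtain i where i: "elem_order a0 = p ^ i" using pA by blast
    hence "p dvd elem_order a0" using ge2[OF a0] by (cases i) auto
    hence "elem_order (nsmul (elem_order a0 div p) a0) = p"
      using pos[of a0] prime_gt_0_nat[OF p(1)] by (intro elem_order_nsmul_div) auto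
    then obtain k where "nsmul (p ^ k) b = 0" using H prime_ge_2_nat[OF p(1)] by metis
    moreover have "p ^ k > 0" using prime_gt_0_nat[OF p(1)] by simp
    ultimately have "elem_order b dvd p ^ k" using elem_order_dvd by blast
    thus ?thesis using divides_primepow_nat[OF p(1)] by blast
  qed
  show ?thesis using p(1) pA pB by (auto simp: is_p_group_def)
qed

lemma exists_fdeg_delta_fun_infinite:
  assumes ntA: "\<exists>a::'a::ab_group_add. a \<noteq> 0" and ntB: "\<exists>b::'b::ab_group_add. b \<noteq> 0"
    and no_p: "\<not> (\<exists>p. prime p \<and> finite (UNIV :: 'a set) \<and>
                    is_p_group p TYPE('a) \<and> is_p_group p TYPE('b))"
  shows "\<exists>b::'b. fdeg (delta_fun (0::'a) b) = \<infinity>"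
proof (cases "finite (UNIV :: 'a set)")
  case True
  then obtain a :: 'a and b :: 'b where "elem_order a \<ge> 2" "\<And>k. nsmul (elem_order a ^ k) b \<noteq> 0"
    using common_prime_if_order_powers_annihilate[OF True ntA ntB] no_p by blast
  thus ?thesis using fdeg_delta_fun_infinite_if_powers_ne_0 by blast
qed (use ntB fdeg_delta_fun_infinite_if_infinite in blast)

section \<open>Binomial coefficients of prime powers\<close>

lemma prime_power_factorE:
  assumes "prime (p::nat)" and "l > 0"
  obtains v m where "l = p ^ v * m" "\<not> p dvd m"
proof -
  have "\<not> is_unit p" using prime_gt_1_nat[OF assms(1)] by simp
  thus ?thesis using multiplicity_decompose'[of l p] assms(2) that by auto
qed

lemma prime_not_dvd_choose_prime_power_minus_1:
  assumes p: "prime (p::nat)" shows "i < p ^ a \<Longrightarrow> \<not> p dvd (p ^ a - 1 choose i)"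
proof (induction i)
  case 0 thus ?case using prime_gt_1_nat[OF p] by simp
next
  case (Suc i)
  define N where "N = p ^ a"
  have iN: "Suc i < N" using Suc.prems N_def by simp
  have ih: "\<not> p dvd (N - 1 choose i)" using Suc iN N_def by simp
  obtain v m where vm: "Suc i = p ^ v * m" "\<not> p dvd m" using prime_power_factorE[OF p] by blast
  show ?case
  proof
    assume "p dvd (p ^ a - 1 choose Suc i)"
    hence "p ^ Suc v dvd (N - 1 choose Suc i) * Suc i"
      using vm N_def by (simp add: mult_dvd_mono)
    hence "p ^ Suc v dvd (N - 1 choose i) * (N - 1 - i)"
      by (metis binomial_absorb_comp binomial_absorption mult.commute)
    moreover have "coprime (N - 1 choose i) (p ^ Suc v)" by (rule prime_imp_power_coprime_nat[OF p ih])
    hence "coprime (p ^ Suc v) (N - 1 choose i)" by (rule coprime_commute[THEN iffD1])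
    ultimately have d1: "p ^ Suc v dvd (N - 1 - i)" using coprime_dvd_mult_right_iff by blast
    have "v < a"
    proof (rule ccontr)
      assume "\<not> v < a"
      hence "N dvd Suc i" using vm N_def by (metis dvd_mult2 le_imp_power_dvd not_less)
      thus False using iN by (simp add: nat_dvd_not_less)
    qed
    hence "p ^ Suc v dvd N" unfolding N_def by (intro le_imp_power_dvd) simp
    hence "p ^ Suc v dvd N - (N - 1 - i)" using d1 by (rule dvd_diff_nat)
    moreover have "N - (N - 1 - i) = Suc i" using iN by simp
    ultimately have "p * p ^ v dvd m * p ^ v" using vm by (simp add: mult.commute)
    hence "p dvd m" using prime_gt_0_nat[OF p] by simp
    thus False using vm by simp
  qed
qed

lemma prime_power_dvd_choose_prime_power:
  assumes p: "prime (p::nat)" and j: "j = p ^ v * m" "\<not> p dvd m" and v: "v \<le> a"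
  shows "p ^ (a - v) dvd (p ^ a choose j)"
proof -
  have "m \<noteq> 0" using j(2) by (cases "m = 0") auto
  hence "j > 0" using j(1) prime_gt_0_nat[OF p] by simp
  define C C' where "C = p ^ a choose j" and "C' = p ^ a - 1 choose (j - 1)"
  have "j * C = p ^ a * C'" unfolding C_def C'_def using \<open>j > 0\<close> by (rule times_binomial_minus1_eq)
  moreover have "p ^ a = p ^ v * p ^ (a - v)" using v by (simp flip: power_add)
  ultimately have "p ^ v * (m * C) = p ^ v * (p ^ (a - v) * C')" using j(1) by (simp add: ac_simps)
  hence "p ^ (a - v) dvd m * C" using prime_gt_0_nat[OF p] by simp
  moreover have "coprime m (p ^ (a - v))" by (rule prime_imp_power_coprime_nat[OF p j(2)])
  hence "coprime (p ^ (a - v)) m" by (rule coprime_commute[THEN iffD1])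
  ultimately show ?thesis unfolding C_def using coprime_dvd_mult_right_iff by blast
qed

lemma prime_power_choose_weight:
  assumes p: "prime (p::nat)" and a: "a \<ge> 1" and j: "0 < j" "j < p ^ a"
  shows "\<exists>d u. p ^ a choose j = p ^ d * u \<and> p ^ a \<le> d * ((p - 1) * p ^ (a - 1)) + j \<and>
            (j \<noteq> p ^ (a - 1) \<longrightarrow> p ^ a < d * ((p - 1) * p ^ (a - 1)) + j)"
proof -
  have Na: "p ^ a = p * p ^ (a - 1)" using a by (simp flip: power_Suc)
  obtain v m where vm: "j = p ^ v * m" "\<not> p dvd m" using prime_power_factorE[OF p j(1)] by blast
  have "v < a"
  proof (rule ccontr)
    assume "\<not> v < a"
    hence "p ^ a dvd j" using vm by (metis dvd_mult2 le_imp_power_dvd not_less)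
    thus False using j by (simp add: nat_dvd_not_less)
  qed
  show ?thesis
  proof (cases "v = a - 1")
    case True
    have "p ^ (a - v) = p" using True a by simp
    then obtain u where u: "p ^ a choose j = p * u"
      using prime_power_dvd_choose_prime_power[OF p vm, of a] \<open>v < a\<close> by (auto elim: dvdE)
    have "m \<noteq> 0" using vm(2) by (cases "m = 0") auto
    moreover have "m < p" using vm j Na True prime_gt_0_nat[OF p] by (metis mult.commute mult_less_cancel1)
    ultimately have m: "0 < m" "m < p" by auto
    have w: "(p - 1) * p ^ (a - 1) + j = (p - 1 + m) * p ^ (a - 1)"
      using vm True by (simp add: algebra_simps)
    have "p ^ a \<le> (p - 1 + m) * p ^ (a - 1)" using m Na by simp
    moreover have "p ^ a < (p - 1 + m) * p ^ (a - 1)" if "j \<noteq> p ^ (a - 1)"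
    proof -
      have "m \<noteq> 1" using that vm True by auto
      thus ?thesis using m Na prime_gt_0_nat[OF p] by simp
    qed
    ultimately show ?thesis using u w by (intro exI[of _ 1] exI[of _ u]) auto
  next
    case False
    have "p ^ 2 dvd p ^ (a - v)" using False \<open>v < a\<close> by (intro le_imp_power_dvd) simp
    moreover have "p ^ (a - v) dvd (p ^ a choose j)"
      using prime_power_dvd_choose_prime_power[OF p vm, of a] \<open>v < a\<close> by simp
    ultimately have "p ^ 2 dvd (p ^ a choose j)" by (rule dvd_trans)
    then obtain u where u: "p ^ a choose j = p ^ 2 * u" by (elim dvdE)
    have "p * p ^ (a - 1) \<le> 2 * ((p - 1) * p ^ (a - 1))"
      using prime_ge_2_nat[OF p] by simp
    hence "p ^ a < 2 * ((p - 1) * p ^ (a - 1)) + j" using j(1) Na by linarith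
    thus ?thesis using u by (intro exI[of _ 2] exI[of _ u]) auto
  qed
qed

lemma prime_power_choose_prime_power_div:
  assumes p: "prime (p::nat)" and a: "a \<ge> 1"
  shows "\<exists>u. p ^ a choose p ^ (a - 1) = p * u \<and> \<not> p dvd u"
proof -
  have j0: "p ^ (a - 1) > 0" using prime_gt_0_nat[OF p] by simp
  define C C' where "C = p ^ a choose p ^ (a - 1)" and "C' = p ^ a - 1 choose (p ^ (a - 1) - 1)"
  have "p ^ (a - 1) * C = p ^ a * C'"
    unfolding C_def C'_def using j0 times_binomial_minus1_eq by blast
  moreover have "p ^ a = p ^ (a - 1) * p" using a by (simp flip: power_Suc2)
  ultimately have "p ^ (a - 1) * C = p ^ (a - 1) * (p * C')" by (simp add: ac_simps)
  hence "C = p * C'" using j0 prime_gt_0_nat[OF p] by simp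
  hence "p ^ a choose p ^ (a - 1) = p * (p ^ a - 1 choose (p ^ (a - 1) - 1))"
    unfolding C_def C'_def .
  moreover have "p ^ (a - 1) \<le> p ^ a" using prime_gt_0_nat[OF p] by (intro power_increasing) auto
  hence "\<not> p dvd (p ^ a - 1 choose (p ^ (a - 1) - 1))"
    using j0 by (intro prime_not_dvd_choose_prime_power_minus_1[OF p]) linarith
  ultimately show ?thesis by blast
qed

section \<open>Divisibility of iterated differences along an element of \<open>p\<close>-power order\<close>

text \<open>
  For \<open>e\<close> killed by \<open>N = p\<^sup>a\<close>, \<open>in_filt w G\<close> says that \<open>G\<close> is a sum of terms \<open>p\<^sup>s \<Delta>\<^sub>e\<^sup>i h\<close>
  with \<open>i < N\<close>, \<open>h\<close> in a class \<open>P\<close> closed under negated multiples, and weight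
  \<open>s L + i \<ge> w\<close>, where \<open>L = (p - 1) p\<^sup>a\<^sup>-\<^sup>1\<close>.  Applying \<open>\<Delta>\<^sub>e\<close> raises the weight by one: a term
  reaching \<open>i = N\<close> is rewritten by the binomial expansion of \<open>\<Delta>\<^sub>e\<^sup>N\<close>, whose coefficients
  carry enough factors \<open>p\<close>.
\<close>

locale p_filtration =
  fixes e :: "'a::ab_group_add" and p a :: nat and P :: "('a \<Rightarrow> 'b::ab_group_add) \<Rightarrow> bool"
  assumes p: "prime p" and a: "a \<ge> 1" and e_killed: "nsmul (p ^ a) e = 0"
      and P_closed: "\<And>h u. P h \<Longrightarrow> P (nsmul_fun u (\<lambda>x. - h x))"
begin

definition N where "N = p ^ a"
definition L where "L = (p - 1) * p ^ (a - 1)"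

lemma N_pos: "N > 0" unfolding N_def using prime_gt_0_nat[OF p] by simp
lemma L_pos: "L > 0" unfolding L_def using prime_gt_1_nat[OF p] by simp

inductive in_filt :: "nat \<Rightarrow> ('a \<Rightarrow> 'b) \<Rightarrow> bool" where
  in_filt_zero: "in_filt w (\<lambda>_. 0)"
| in_filt_term: "i < N \<Longrightarrow> w \<le> s * L + i \<Longrightarrow> P h \<Longrightarrow> in_filt w (nsmul_fun (p ^ s) ((Delta e ^^ i) h))"
| in_filt_add: "in_filt w G1 \<Longrightarrow> in_filt w G2 \<Longrightarrow> in_filt w (\<lambda>x. G1 x + G2 x)"

lemma in_filt_mono: "in_filt w G \<Longrightarrow> w' \<le> w \<Longrightarrow> in_filt w' G"
proof (induction rule: in_filt.induct)
  case (in_filt_zero w) show ?case by (rule in_filt.in_filt_zero)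
next
  case (in_filt_term i w s h) thus ?case by (intro in_filt.in_filt_term) auto
next
  case (in_filt_add w G1 G2) thus ?case by (intro in_filt.in_filt_add) auto
qed

lemma in_filt_sum: "finite S \<Longrightarrow> (\<And>j. j \<in> S \<Longrightarrow> in_filt w (X j)) \<Longrightarrow> in_filt w (\<lambda>x. \<Sum>j\<in>S. X j x)"
proof (induction S rule: finite_induct)
  case empty thus ?case by (simp add: in_filt_zero)
next
  case (insert j S)
  have "in_filt w (\<lambda>x. X j x + (\<lambda>x. \<Sum>j\<in>S. X j x) x)"
    using insert by (intro in_filt_add) auto
  thus ?case using insert by simp
qed

lemma in_filt_nsmul_fun: "in_filt w G \<Longrightarrow> in_filt (w + m * L) (nsmul_fun (p ^ m) G)"
proof (induction rule: in_filt.induct)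
  case (in_filt_zero w) thus ?case by (simp add: in_filt.in_filt_zero)
next
  case (in_filt_term i w s h)
  have "nsmul_fun (p ^ m) (nsmul_fun (p ^ s) ((Delta e ^^ i) h)) = nsmul_fun (p ^ (m + s)) ((Delta e ^^ i) h)"
    by (simp add: nsmul_fun_mult[symmetric] power_add)
  moreover have "in_filt (w + m * L) (nsmul_fun (p ^ (m + s)) ((Delta e ^^ i) h))"
    using in_filt_term by (intro in_filt.in_filt_term) (auto simp: algebra_simps)
  ultimately show ?case by simp
next
  case (in_filt_add w G1 G2) thus ?case by (simp add: nsmul_fun_plus in_filt.in_filt_add)
qed

lemma in_filt_base: "P g \<Longrightarrow> in_filt 0 g"
  using in_filt_term[of 0 0 0 g] N_pos by simp

lemma in_filt_Suc_Deltan_N: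
  assumes s: "w \<le> s * L + (N - 1)" and h: "P h"
  shows "in_filt (Suc w) (nsmul_fun (p ^ s) ((Delta e ^^ N) h))"
proof -
  have NE: "nsmul N e = 0" using e_killed N_def by simp
  have "(Delta e ^^ N) h = (\<lambda>x. \<Sum>j\<in>{1..<N}. nsmul (N choose j) ((Delta e ^^ j) (\<lambda>y. - h y) x))"
    by (rule Deltan_elem_order_expansion[OF NE N_pos])
  hence "nsmul_fun (p ^ s) ((Delta e ^^ N) h) = (\<lambda>x. \<Sum>j\<in>{1..<N}. nsmul (p ^ s) (nsmul (N choose j) ((Delta e ^^ j) (\<lambda>y. - h y) x)))"
    by (simp add: nsmul_fun_def nsmul_sum)
  moreover have "in_filt (Suc w) (\<lambda>x. \<Sum>j\<in>{1..<N}. nsmul (p ^ s) (nsmul (N choose j) ((Delta e ^^ j) (\<lambda>y. - h y) x)))"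
  proof (rule in_filt_sum)
    fix j assume j: "j \<in> {1..<N}"
    then obtain d u where du: "N choose j = p ^ d * u" "N \<le> d * L + j"
      using prime_power_choose_weight[OF p a, of j] unfolding N_def L_def by auto
    have dp: "(Delta e ^^ j) (nsmul_fun u (\<lambda>y. - h y)) = nsmul_fun u ((Delta e ^^ j) (\<lambda>y. - h y))" by (rule Deltan_nsmul_fun)
    have "(\<lambda>x. nsmul (p ^ s) (nsmul (N choose j) ((Delta e ^^ j) (\<lambda>y. - h y) x))) =
          nsmul_fun (p ^ (s + d)) ((Delta e ^^ j) (nsmul_fun u (\<lambda>y. - h y)))"
      unfolding dp by (simp add: du(1) nsmul_fun_def nsmul_mult[symmetric] power_add ac_simps)
    moreover have "in_filt (Suc w) (nsmul_fun (p ^ (s + d)) ((Delta e ^^ j) (nsmul_fun u (\<lambda>y. - h y))))"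
    proof (rule in_filt_term)
      show "j < N" using j by simp
      show "P (nsmul_fun u (\<lambda>y. - h y))" using P_closed h by blast
      show "Suc w \<le> (s + d) * L + j" using s du(2) N_pos by (simp add: algebra_simps)
    qed
    ultimately show "in_filt (Suc w) (\<lambda>x. nsmul (p ^ s) (nsmul (N choose j) ((Delta e ^^ j) (\<lambda>y. - h y) x)))" by simp
  qed simp
  ultimately show ?thesis by simp
qed

lemma in_filt_Delta: "in_filt w G \<Longrightarrow> in_filt (Suc w) (Delta e G)"
proof (induction rule: in_filt.induct)
  case (in_filt_zero w) thus ?case by (simp add: in_filt.in_filt_zero)
next
  case (in_filt_term i w s h)
  have eq: "Delta e (nsmul_fun (p ^ s) ((Delta e ^^ i) h)) = nsmul_fun (p ^ s) ((Delta e ^^ Suc i) h)"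
    by (simp only: funpow.simps o_apply Delta_nsmul_fun)
  show ?case
  proof (cases "Suc i < N")
    case True
    show ?thesis unfolding eq by (rule in_filt.in_filt_term) (use in_filt_term True in auto)
  next
    case False
    hence "Suc i = N" using in_filt_term by simp
    moreover have "w \<le> s * L + (N - 1)" using in_filt_term \<open>Suc i = N\<close> by simp
    ultimately show ?thesis using in_filt_Suc_Deltan_N in_filt_term eq by metis
  qed
next
  case (in_filt_add w G1 G2) thus ?case by (simp add: Delta_plus in_filt.in_filt_add)
qed

lemma in_filt_Deltan: "in_filt w G \<Longrightarrow> in_filt (w + k) ((Delta e ^^ k) G)"
  by (induction k) (simp_all add: in_filt_Delta)

lemma L_plus_p_power: "L + p ^ (a - 1) = N"
proof -
  have "L + p ^ (a - 1) = p * p ^ (a - 1)" unfolding L_def using prime_gt_0_nat[OF p] by (simp add: algebra_simps)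
  thus ?thesis unfolding N_def using a by (simp flip: power_Suc)
qed

lemma in_filt_Deltan_base: "P g \<Longrightarrow> in_filt k ((Delta e ^^ k) g)"
  using in_filt_Deltan[OF in_filt_base] by fastforce

lemma in_filt_divisible:
  assumes "in_filt w G" and cond: "\<And>s i. i < N \<Longrightarrow> w \<le> s * L + i \<Longrightarrow> t \<le> s"
    and R0: "R (\<lambda>_. 0)" and Radd: "\<And>G1 G2. R G1 \<Longrightarrow> R G2 \<Longrightarrow> R (\<lambda>x. G1 x + G2 x)"
    and Rterm: "\<And>c i h. P h \<Longrightarrow> R (nsmul_fun c ((Delta e ^^ i) h))"
  shows "\<exists>H. G = nsmul_fun (p ^ t) H \<and> R H"
  using assms(1) cond
proof (induction rule: in_filt.induct)
  case (in_filt_zero w) thus ?case using R0 by (intro exI[of _ "\<lambda>_. 0"]) simp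
next
  case (in_filt_term i w s h)
  hence ts: "t \<le> s" by blast
  hence "nsmul_fun (p ^ s) ((Delta e ^^ i) h) = nsmul_fun (p ^ t) (nsmul_fun (p ^ (s - t)) ((Delta e ^^ i) h))"
    by (simp add: nsmul_fun_mult[symmetric] power_add[symmetric])
  thus ?case using Rterm in_filt_term by blast
next
  case (in_filt_add w G1 G2)
  then obtain H1 H2 where "G1 = nsmul_fun (p ^ t) H1" "R H1" "G2 = nsmul_fun (p ^ t) H2" "R H2" by blast
  thus ?case using Radd by (intro exI[of _ "\<lambda>x. H1 x + H2 x"]) (simp add: nsmul_fun_plus)
qed

lemma in_filt_off_center_term:
  assumes h: "P h" and j: "0 < j" "j < N" "j \<noteq> p ^ (a - 1)"
  shows "in_filt (N + L) (nsmul_fun (N choose j) ((Delta e ^^ (L - 1 + j)) (\<lambda>y. - h y)))"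
proof -
  obtain d u where du: "N choose j = p ^ d * u" "N < d * L + j"
    using prime_power_choose_weight[OF p a j(1)] j(2,3) unfolding N_def L_def by blast
  have "in_filt (d * L + j) (nsmul_fun (p ^ d) ((Delta e ^^ j) (nsmul_fun u (\<lambda>y. - h y))))"
    using j P_closed[OF h] by (intro in_filt_term) auto
  hence "in_filt (d * L + j + (L - 1))
           ((Delta e ^^ (L - 1)) (nsmul_fun (p ^ d) ((Delta e ^^ j) (nsmul_fun u (\<lambda>y. - h y)))))"
    by (rule in_filt_Deltan)
  moreover have "(Delta e ^^ (L - 1)) (nsmul_fun (p ^ d) ((Delta e ^^ j) (nsmul_fun u (\<lambda>y. - h y)))) =
      nsmul_fun (N choose j) ((Delta e ^^ (L - 1 + j)) (\<lambda>y. - h y))"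
    unfolding du(1) by (simp only: Deltan_nsmul_fun nsmul_fun_mult funpow_add o_apply)
  ultimately show ?thesis using du(2) L_pos by (auto elim: in_filt_mono)
qed

lemma Deltan_leading_term:
  assumes h: "P h"
  shows "\<exists>u R. \<not> p dvd u \<and> in_filt (N + L) R \<and>
     (Delta e ^^ (N - 1 + L)) h = (\<lambda>x. nsmul_fun p ((Delta e ^^ (N - 1)) (nsmul_fun u (\<lambda>y. - h y))) x + R x)"
proof -
  obtain u0 where u0: "N choose p ^ (a - 1) = p * u0" "\<not> p dvd u0"
    using prime_power_choose_prime_power_div[OF p a] unfolding N_def by blast
  define j0 where "j0 = p ^ (a - 1)"
  define S where "S = {1..<N}"
  define F where "F = (\<lambda>j. nsmul_fun (N choose j) ((Delta e ^^ (L - 1 + j)) (\<lambda>y. - h y)))"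
  have j0S: "j0 \<in> S" unfolding S_def j0_def using L_plus_p_power L_pos prime_gt_0_nat[OF p] by auto
  have NE: "nsmul N e = 0" using e_killed N_def by simp
  have e1: "(Delta e ^^ (N - 1 + L)) h = (Delta e ^^ (L - 1)) ((Delta e ^^ N) h)"
  proof -
    have "N - 1 + L = (L - 1) + N" using N_pos L_pos by simp
    thus ?thesis by (simp only: funpow_add o_apply)
  qed
  have e2: "(Delta e ^^ N) h = (\<lambda>x. \<Sum>j\<in>S. nsmul_fun (N choose j) ((Delta e ^^ j) (\<lambda>y. - h y)) x)"
    unfolding S_def nsmul_fun_def by (rule Deltan_elem_order_expansion[OF NE N_pos])
  have e3: "(Delta e ^^ (N - 1 + L)) h = (\<lambda>x. \<Sum>j\<in>S. F j x)"
    unfolding e1 e2 Deltan_sum F_def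
    by (simp only: Deltan_nsmul_fun funpow_add o_apply)
  have e4: "(\<lambda>x. \<Sum>j\<in>S. F j x) = (\<lambda>x. F j0 x + (\<Sum>j\<in>S - {j0}. F j x))"
  proof
    fix x show "(\<Sum>j\<in>S. F j x) = F j0 x + (\<Sum>j\<in>S - {j0}. F j x)"
      by (rule sum.remove[OF _ j0S]) (simp add: S_def)
  qed
  have e5: "F j0 = nsmul_fun p ((Delta e ^^ (N - 1)) (nsmul_fun u0 (\<lambda>y. - h y)))"
  proof -
    have l: "L - 1 + j0 = N - 1" using L_plus_p_power L_pos unfolding j0_def by simp
    have "F j0 = nsmul_fun (N choose j0) ((Delta e ^^ (N - 1)) (\<lambda>y. - h y))"
      unfolding F_def l ..
    hence "F j0 = nsmul_fun (p * u0) ((Delta e ^^ (N - 1)) (\<lambda>y. - h y))"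
      unfolding j0_def u0(1) .
    also have "\<dots> = nsmul_fun p ((Delta e ^^ (N - 1)) (nsmul_fun u0 (\<lambda>y. - h y)))"
      by (simp only: nsmul_fun_mult Deltan_nsmul_fun)
    finally show ?thesis .
  qed
  have fR: "in_filt (N + L) (\<lambda>x. \<Sum>j\<in>S - {j0}. F j x)"
  proof (rule in_filt_sum)
    fix j assume "j \<in> S - {j0}"
    thus "in_filt (N + L) (F j)"
      unfolding F_def S_def j0_def by (intro in_filt_off_center_term[OF h]) auto
  qed (simp add: S_def)
  show ?thesis using e3 e4 e5 fR u0(2) by (intro exI[of _ u0] exI[of _ "\<lambda>x. \<Sum>j\<in>S - {j0}. F j x"]) simp
qed

end

definition ann_subset :: "('a \<Rightarrow> 'b::ab_group_add) \<Rightarrow> ('a \<Rightarrow> 'b) \<Rightarrow> bool" where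
  "ann_subset g h \<longleftrightarrow> (\<forall>n. (\<forall>x. nsmul n (g x) = 0) \<longrightarrow> (\<forall>x. nsmul n (h x) = 0))"

lemma ann_subset_refl: "ann_subset g g" by (simp add: ann_subset_def)
lemma ann_subset_zero: "ann_subset g (\<lambda>_. 0)" by (simp add: ann_subset_def)
lemma ann_subset_add: "ann_subset g H1 \<Longrightarrow> ann_subset g H2 \<Longrightarrow> ann_subset g (\<lambda>x. H1 x + H2 x)"
  by (simp add: ann_subset_def nsmul_plus)
lemma ann_subset_nsmul_fun_uminus: "ann_subset g h \<Longrightarrow> ann_subset g (nsmul_fun u (\<lambda>x. - h x))"
  unfolding ann_subset_def nsmul_fun_def by (metis nsmul_comm nsmul_uminus nsmul_zero neg_0_equal_iff_equal)
lemma ann_subset_nsmul_fun_Deltan: "ann_subset g h \<Longrightarrow> ann_subset g (nsmul_fun c ((Delta e ^^ i) h))"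
proof -
  assume a: "ann_subset g h"
  show ?thesis unfolding ann_subset_def
  proof (intro allI impI)
    fix n x assume "\<forall>x. nsmul n (g x) = 0"
    hence "nsmul_fun n h = (\<lambda>_. 0)" using a by (simp add: ann_subset_def nsmul_fun_def fun_eq_iff)
    hence "(Delta e ^^ i) (nsmul_fun n h) = (\<lambda>_. 0)" by simp
    hence "nsmul_fun n ((Delta e ^^ i) h) = (\<lambda>_. 0)" by (simp add: Deltan_nsmul_fun)
    hence "nsmul n ((Delta e ^^ i) h x) = 0" by (simp add: nsmul_fun_def fun_eq_iff)
    thus "nsmul n (nsmul_fun c ((Delta e ^^ i) h) x) = 0" by (simp add: nsmul_fun_def nsmul_comm)
  qed
qed
lemma ann_subset_trans: "ann_subset g h \<Longrightarrow> ann_subset h k \<Longrightarrow> ann_subset g k"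
  by (simp add: ann_subset_def)

definition Deltan_pexp :: "nat \<Rightarrow> nat \<Rightarrow> nat \<Rightarrow> nat" where
  "Deltan_pexp p a k = (if k < p ^ a then 0 else Suc ((k - p ^ a) div ((p - 1) * p ^ (a - 1))))"

lemma Deltan_divisible:
  assumes p: "prime p" and e_killed: "nsmul (p ^ a) e = 0"
  shows "\<exists>H. (Delta e ^^ k) g = nsmul_fun (p ^ Deltan_pexp p a k) H \<and> ann_subset g H"
proof (cases "a = 0")
  case True
  hence e0: "e = 0" using e_killed by simp
  show ?thesis
  proof (cases k)
    case 0 thus ?thesis using True by (intro exI[of _ g]) (simp add: Deltan_pexp_def ann_subset_refl)
  next
    case (Suc k')
    have "(Delta e ^^ k) g = (\<lambda>_. 0)" using Suc e0 by (simp add: Delta_0_dir)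
    thus ?thesis by (intro exI[of _ "\<lambda>_. 0"]) (simp add: ann_subset_zero)
  qed
next
  case False
  interpret p_filtration e p a "ann_subset g"
    using p e_killed False ann_subset_nsmul_fun_uminus by unfold_locales auto
  have f: "in_filt k ((Delta e ^^ k) g)" by (rule in_filt_Deltan_base) (rule ann_subset_refl)
  show ?thesis
  proof (rule in_filt_divisible[OF f])
    fix s i assume i: "i < N" "k \<le> s * L + i"
    show "Deltan_pexp p a k \<le> s"
    proof (cases "k < N")
      case True thus ?thesis by (simp add: Deltan_pexp_def N_def)
    next
      case False
      show ?thesis
      proof (rule ccontr)
        assume "\<not> Deltan_pexp p a k \<le> s"
        hence "s \<le> (k - N) div L" using False by (simp add: Deltan_pexp_def N_def L_def)
        hence "s * L \<le> (k - N) div L * L" by simp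
        also have "\<dots> \<le> k - N" by (rule div_times_less_eq_dividend)
        finally show False using i False by linarith
      qed
    qed
  qed (auto intro: ann_subset_zero ann_subset_add ann_subset_nsmul_fun_Deltan)
qed

locale delta_filtration =
  fixes e :: "'a::ab_group_add" and p a :: nat and b :: "'b::ab_group_add"
  assumes prime_p: "prime p" and a_pos: "a \<ge> 1" and elem_order_e: "elem_order e = p ^ a"
    and p_group_B: "is_p_group p TYPE('b)" and b_nonzero: "b \<noteq> 0"
begin

lemma uminus_nsmul_b: obtains k where "\<not> p dvd k" "\<And>c. - nsmul c b = nsmul (k * c) b"
proof -
  obtain g where g: "elem_order b = p ^ g" using p_group_B is_p_groupD by blast
  have "g \<noteq> 0" using g b_nonzero elem_order_eq_1_iff by fastforce
  hence "p dvd p ^ g" by simp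
  moreover have "p ^ g \<ge> 1" using prime_gt_0_nat[OF prime_p] by simp
  ultimately have "\<not> p dvd (p ^ g - 1)"
    using prime_gt_1_nat[OF prime_p] by (metis diff_diff_cancel dvd_diff_nat nat_dvd_1_iff_1 less_irrefl)
  moreover have "- nsmul c b = nsmul ((p ^ g - 1) * c) b" for c
  proof -
    have "nsmul ((p ^ g - 1) * c) b + nsmul c b = nsmul c (nsmul (p ^ g) b)"
      using \<open>p ^ g \<ge> 1\<close> by (simp flip: nsmul_add nsmul_mult add: algebra_simps)
    also have "\<dots> = 0" using g nsmul_elem_order[of b] by simp
    finally show ?thesis by (metis add.commute minus_unique)
  qed
  ultimately show ?thesis using that by blast
qed

sublocale p_filtration e p a "\<lambda>h. \<exists>c. h = delta_fun 0 (nsmul c b)"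
proof
  show "nsmul (p ^ a) e = 0" using elem_order_e nsmul_elem_order by metis
  fix h u assume "\<exists>c. h = delta_fun 0 (nsmul c b)"
  then obtain c where "h = delta_fun 0 (nsmul c b)" by blast
  moreover obtain k where "\<And>c. - nsmul c b = nsmul (k * c) b" using uminus_nsmul_b by blast
  ultimately show "\<exists>c. nsmul_fun u (\<lambda>x. - h x) = delta_fun 0 (nsmul c b)"
    by (auto simp: nsmul_fun_def delta_fun_def fun_eq_iff nsmul_mult intro!: exI[of _ "u * (k * c)"])
qed (use prime_p a_pos in auto)

lemma in_filt_eval:
  assumes "in_filt w G" and "\<And>s. w \<le> s * L + (N - 1) \<Longrightarrow> t \<le> s"
  shows "\<exists>c. G e = nsmul (p ^ t) (nsmul c b)"
  using assms
proof (induction rule: in_filt.induct)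
  case (in_filt_zero w) thus ?case by (intro exI[of _ 0]) simp
next
  case (in_filt_term i w s h)
  obtain c where c: "h = delta_fun 0 (nsmul c b)" using in_filt_term by blast
  have ord: "elem_order e = N" using elem_order_e N_def by simp
  show ?case
  proof (cases "i = N - 1")
    case True
    hence "t \<le> s" using in_filt_term by blast
    hence "p ^ s * c = p ^ t * (p ^ (s - t) * c)" by (simp flip: power_add)
    moreover have "nsmul_fun (p ^ s) ((Delta e ^^ i) h) e = nsmul (p ^ s) (nsmul c b)"
      using Deltan_delta_fun_at_dir[OF ord N_pos in_filt_term(1), of "nsmul c b"] c True
      by (simp add: nsmul_fun_def)
    ultimately show ?thesis by (metis nsmul_mult)
  next
    case False
    hence "nsmul_fun (p ^ s) ((Delta e ^^ i) h) e = 0"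
      using Deltan_delta_fun_at_dir[OF ord N_pos in_filt_term(1), of "nsmul c b"] c
      by (simp add: nsmul_fun_def)
    thus ?thesis by (intro exI[of _ 0]) simp
  qed
next
  case (in_filt_add w G1 G2)
  then obtain c1 c2 where "G1 e = nsmul (p ^ t) (nsmul c1 b)" "G2 e = nsmul (p ^ t) (nsmul c2 b)" by blast
  thus ?case by (intro exI[of _ "c1 + c2"]) (simp add: nsmul_add nsmul_plus)
qed

text \<open>
  In the expansion of \<open>\<Delta>\<^sub>e\<^sup>L \<Delta>\<^sub>e\<^sup>N\<^sup>-\<^sup>1 = \<Delta>\<^sub>e\<^sup>L\<^sup>-\<^sup>1 \<Delta>\<^sub>e\<^sup>N\<close>, only the term \<open>j = p\<^sup>a\<^sup>-\<^sup>1\<close> has weight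
  exactly \<open>N + L - 1\<close>; its coefficient is \<open>p\<close> times a unit modulo \<open>p\<close>.
\<close>

lemma Deltan_delta_fun_leading_term:
  assumes "\<not> p dvd c"
  obtains c' R where "\<not> p dvd c'" "in_filt (N + L) R"
    "(Delta e ^^ (N - 1 + L)) (delta_fun 0 (nsmul c b)) =
       (\<lambda>x. nsmul_fun p ((Delta e ^^ (N - 1)) (delta_fun 0 (nsmul c' b))) x + R x)"
proof -
  obtain u R where uR: "\<not> p dvd u" "in_filt (N + L) R"
    "(Delta e ^^ (N - 1 + L)) (delta_fun 0 (nsmul c b)) =
       (\<lambda>x. nsmul_fun p ((Delta e ^^ (N - 1)) (nsmul_fun u (\<lambda>y. - delta_fun 0 (nsmul c b) y))) x + R x)"
    using Deltan_leading_term[of "delta_fun 0 (nsmul c b)"] by blast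
  obtain k where k: "\<not> p dvd k" "\<And>c. - nsmul c b = nsmul (k * c) b" using uminus_nsmul_b by blast
  have eq: "nsmul_fun u (\<lambda>y. - delta_fun 0 (nsmul c b) y) = delta_fun 0 (nsmul (u * (k * c)) b)"
    using k(2) by (auto simp: nsmul_fun_def delta_fun_def fun_eq_iff nsmul_mult)
  have "\<not> p dvd u * (k * c)" using uR(1) k(1) assms prime_p by (simp add: prime_dvd_mult_iff)
  from that[OF this uR(2)] show ?thesis using uR(3) unfolding eq by blast
qed

lemma Deltan_delta_fun_expansion:
  "\<exists>c R. \<not> p dvd c \<and> in_filt (N + k * L) R \<and>
     (Delta e ^^ (N - 1 + k * L)) (delta_fun 0 b) =
       (\<lambda>x. nsmul_fun (p ^ k) ((Delta e ^^ (N - 1)) (delta_fun 0 (nsmul c b))) x + R x)"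
proof (induction k)
  case 0
  have "\<not> p dvd 1" using prime_gt_1_nat[OF prime_p] by simp
  thus ?case using in_filt_zero by (intro exI[of _ 1] exI[of _ "\<lambda>_. 0"]) simp
next
  case (Suc k)
  then obtain c R where cR: "\<not> p dvd c" "in_filt (N + k * L) R"
    "(Delta e ^^ (N - 1 + k * L)) (delta_fun 0 b) =
       (\<lambda>x. nsmul_fun (p ^ k) ((Delta e ^^ (N - 1)) (delta_fun 0 (nsmul c b))) x + R x)" by blast
  obtain c' R' where c'R': "\<not> p dvd c'" "in_filt (N + L) R'"
    "(Delta e ^^ (N - 1 + L)) (delta_fun 0 (nsmul c b)) =
       (\<lambda>x. nsmul_fun p ((Delta e ^^ (N - 1)) (delta_fun 0 (nsmul c' b))) x + R' x)"
    using Deltan_delta_fun_leading_term[OF cR(1)] by blast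
  have "N - 1 + Suc k * L = L + (N - 1 + k * L)" by simp
  hence "(Delta e ^^ (N - 1 + Suc k * L)) (delta_fun 0 b) =
        (Delta e ^^ L) ((Delta e ^^ (N - 1 + k * L)) (delta_fun 0 b))"
    by (simp only: funpow_add o_apply)
  also have "\<dots> = (\<lambda>x. nsmul_fun (p ^ k) ((Delta e ^^ (N - 1 + L)) (delta_fun 0 (nsmul c b))) x
                      + (Delta e ^^ L) R x)"
    unfolding cR(3) Deltan_plus
    by (simp only: Deltan_nsmul_fun add.commute[of "N - 1" L] funpow_add o_apply)
  also have "\<dots> = (\<lambda>x. nsmul_fun (p ^ Suc k) ((Delta e ^^ (N - 1)) (delta_fun 0 (nsmul c' b))) x +
                      (nsmul_fun (p ^ k) R' x + (Delta e ^^ L) R x))"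
    unfolding c'R'(3) nsmul_fun_plus by (simp add: nsmul_fun_mult[symmetric] mult.commute add.assoc)
  finally have eq: "(Delta e ^^ (N - 1 + Suc k * L)) (delta_fun 0 b) = \<dots>" .
  have "in_filt (N + Suc k * L) (nsmul_fun (p ^ k) R')"
    using in_filt_nsmul_fun[OF c'R'(2), of k] by (simp add: algebra_simps)
  moreover have "in_filt (N + Suc k * L) ((Delta e ^^ L) R)"
    using in_filt_Deltan[OF cR(2), of L] by (simp add: algebra_simps)
  ultimately have "in_filt (N + Suc k * L) (\<lambda>x. nsmul_fun (p ^ k) R' x + (Delta e ^^ L) R x)"
    by (rule in_filt_add)
  thus ?case using eq c'R'(1) by blast
qed

lemma Deltan_delta_fun_nonzero:
  assumes "nsmul (p ^ m) b \<noteq> 0"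
  shows "(Delta e ^^ (N - 1 + m * L)) (delta_fun 0 b) e \<noteq> 0"
proof -
  obtain c R where cR: "\<not> p dvd c" "in_filt (N + m * L) R"
    "(Delta e ^^ (N - 1 + m * L)) (delta_fun 0 b) =
       (\<lambda>x. nsmul_fun (p ^ m) ((Delta e ^^ (N - 1)) (delta_fun 0 (nsmul c b))) x + R x)"
    using Deltan_delta_fun_expansion by blast
  have "\<exists>c2. R e = nsmul (p ^ Suc m) (nsmul c2 b)"
  proof (rule in_filt_eval[OF cR(2)])
    fix s assume "N + m * L \<le> s * L + (N - 1)"
    hence "m * L < s * L" using N_pos by linarith
    thus "Suc m \<le> s" by simp
  qed
  then obtain c2 where c2: "R e = nsmul (p ^ Suc m) (nsmul c2 b)" by blast
  have "(Delta e ^^ (N - 1)) (delta_fun 0 (nsmul c b)) e = nsmul c b"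
    using Deltan_delta_fun_at_dir[of e N "N - 1"] elem_order_e N_def N_pos by simp
  hence "(Delta e ^^ (N - 1 + m * L)) (delta_fun 0 b) e = nsmul (p ^ m) (nsmul c b) + nsmul (p ^ Suc m) (nsmul c2 b)"
    using cR(3) c2 by (simp add: nsmul_fun_def)
  also have "\<dots> = nsmul (c + p * c2) (nsmul (p ^ m) b)"
    by (simp add: nsmul_mult[symmetric] nsmul_add[symmetric] algebra_simps)
  also have "\<dots> \<noteq> 0"
    using cR(1) nsmul_ne_0_if_coprime[OF prime_p p_group_B assms] by (simp add: dvd_add_left_iff)
  finally show ?thesis .
qed

end

section \<open>Finitely generated groups of \<open>p\<close>-power exponent\<close>

lemma sum_update_Suc: "finite S \<Longrightarrow> j \<in> S \<Longrightarrow> sum (i(j := Suc (i j))) S = Suc (sum i S)"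
proof -
  assume S: "finite S" "j \<in> S"
  have "sum (i(j := Suc (i j))) S = Suc (i j) + sum (i(j := Suc (i j))) (S - {j})"
    using S by (simp add: sum.remove)
  also have "sum (i(j := Suc (i j))) (S - {j}) = sum i (S - {j})" by (intro sum.cong) auto
  also have "Suc (i j) + sum i (S - {j}) = Suc (sum i S)" using S by (simp add: sum.remove)
  finally show ?thesis .
qed

definition Delta_mono :: "(nat \<Rightarrow> 'a::ab_group_add) \<Rightarrow> (nat \<Rightarrow> nat) \<Rightarrow> nat list \<Rightarrow> ('a \<Rightarrow> 'b::ab_group_add) \<Rightarrow> 'a \<Rightarrow> 'b" where
  "Delta_mono e i ls h = foldr (\<lambda>l. Delta (e l) ^^ i l) ls h"

lemma Delta_mono_Nil[simp]: "Delta_mono e i [] h = h" by (simp add: Delta_mono_def)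
lemma Delta_mono_Cons: "Delta_mono e i (l # ls) h = (Delta (e l) ^^ i l) (Delta_mono e i ls h)" by (simp add: Delta_mono_def)

lemma Delta_mono_divisible:
  assumes p: "prime p" and ord: "\<And>l. l \<in> set ls \<Longrightarrow> nsmul (p ^ al l) (e l) = 0"
  shows "\<exists>H. Delta_mono e i ls h = nsmul_fun (p ^ (\<Sum>l\<leftarrow>ls. Deltan_pexp p (al l) (i l))) H \<and> ann_subset h H"
  using ord
proof (induction ls)
  case Nil thus ?case by (intro exI[of _ h]) (simp add: ann_subset_refl)
next
  case (Cons l ls)
  then obtain H where H: "Delta_mono e i ls h = nsmul_fun (p ^ (\<Sum>l\<leftarrow>ls. Deltan_pexp p (al l) (i l))) H" "ann_subset h H" by auto
  obtain H' where H': "(Delta (e l) ^^ i l) H = nsmul_fun (p ^ Deltan_pexp p (al l) (i l)) H'" "ann_subset H H'"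
    using Deltan_divisible[OF p Cons.prems[of l]] by auto
  have "Delta_mono e i (l # ls) h = nsmul_fun (p ^ (\<Sum>l\<leftarrow>ls. Deltan_pexp p (al l) (i l))) (nsmul_fun (p ^ Deltan_pexp p (al l) (i l)) H')"
    by (simp only: Delta_mono_Cons H(1) Deltan_nsmul_fun H'(1))
  also have "\<dots> = nsmul_fun (p ^ (\<Sum>l\<leftarrow>l # ls. Deltan_pexp p (al l) (i l))) H'"
    by (simp add: nsmul_fun_mult[symmetric] power_add mult.commute)
  finally show ?case using ann_subset_trans[OF H(2) H'(2)] by blast
qed

lemma Delta_mono_eq_0:
  assumes p: "prime p" and ord: "\<And>l. l \<in> set ls \<Longrightarrow> nsmul (p ^ al l) (e l) = 0"
    and hK: "\<And>x. nsmul (p ^ K) (h x) = 0" and K: "K \<le> (\<Sum>l\<leftarrow>ls. Deltan_pexp p (al l) (i l))"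
  shows "Delta_mono e i ls h = (\<lambda>_. 0)"
proof -
  obtain H where H: "Delta_mono e i ls h = nsmul_fun (p ^ (\<Sum>l\<leftarrow>ls. Deltan_pexp p (al l) (i l))) H" "ann_subset h H"
    using Delta_mono_divisible[of p ls al e i h] p ord by blast
  have HK: "\<And>x. nsmul (p ^ K) (H x) = 0" using H(2) hK unfolding ann_subset_def by blast
  have "p ^ (\<Sum>l\<leftarrow>ls. Deltan_pexp p (al l) (i l)) = p ^ ((\<Sum>l\<leftarrow>ls. Deltan_pexp p (al l) (i l)) - K) * p ^ K"
    using K by (simp add: power_add[symmetric])
  thus ?thesis using H(1) HK by (simp add: nsmul_fun_def fun_eq_iff nsmul_mult)
qed

lemma Delta_mono_extract:
  "distinct ls \<Longrightarrow> j \<in> set ls \<Longrightarrow> Delta_mono e i ls h = (Delta (e j) ^^ i j) (Delta_mono e (i(j := 0)) ls h)"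
proof (induction ls)
  case Nil thus ?case by simp
next
  case (Cons l ls)
  show ?case
  proof (cases "l = j")
    case True
    hence "j \<notin> set ls" using Cons by auto
    hence "Delta_mono e (i(j := 0)) ls h = Delta_mono e i ls h"
      unfolding Delta_mono_def by (intro foldr_cong) auto
    thus ?thesis using True by (simp only: Delta_mono_Cons fun_upd_same funpow_0 id_apply)
  next
    case False
    hence j: "j \<in> set ls" using Cons by auto
    have dls: "distinct ls" using Cons.prems(1) by simp
    have ih: "Delta_mono e i ls h = (Delta (e j) ^^ i j) (Delta_mono e (i(j := 0)) ls h)" by (rule Cons.IH[OF dls j])
    have "Delta_mono e i (l # ls) h = (Delta (e l) ^^ i l) ((Delta (e j) ^^ i j) (Delta_mono e (i(j := 0)) ls h))"
      by (simp only: Delta_mono_Cons ih)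
    also have "\<dots> = (Delta (e j) ^^ i j) ((Delta (e l) ^^ i l) (Delta_mono e (i(j := 0)) ls h))"
      by (rule Deltan_commute)
    also have "(Delta (e l) ^^ i l) (Delta_mono e (i(j := 0)) ls h) = Delta_mono e (i(j := 0)) (l # ls) h"
      using False by (simp add: Delta_mono_Cons)
    finally show ?thesis .
  qed
qed

lemma Delta_Delta_mono:
  assumes "distinct ls" "j \<in> set ls"
  shows "Delta (e j) (Delta_mono e i ls h) = Delta_mono e (i(j := Suc (i j))) ls h"
proof -
  have 1: "Delta_mono e (i(j := Suc (i j))) ls h = (Delta (e j) ^^ (i(j := Suc (i j))) j) (Delta_mono e ((i(j := Suc (i j)))(j := 0)) ls h)"
    by (rule Delta_mono_extract[OF assms])
  have 2: "Delta_mono e i ls h = (Delta (e j) ^^ i j) (Delta_mono e (i(j := 0)) ls h)"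
    by (rule Delta_mono_extract[OF assms])
  show ?thesis unfolding 1 2 by (simp only: fun_upd_same fun_upd_upd funpow.simps o_apply)
qed

text \<open>
  Given generators \<open>e\<^sub>0, \<dots>, e\<^sub>r\<^sub>-\<^sub>1\<close>, \<open>in_mfilt e r P w G\<close> says that \<open>G\<close> is a sum of monomials
  \<open>\<Delta>\<^sub>e\<^sub>0\<^sup>i\<^sup>0 \<cdots> \<Delta>\<^sub>e\<^sub>r\<^sub>-\<^sub>1\<^sup>i\<^sup>r\<^sup>-\<^sup>1 h\<close> with \<open>P h\<close> and total degree at least \<open>w\<close>.  Since
  \<open>\<Delta>\<^sub>a\<^sub>+\<^sub>b = \<Delta>\<^sub>a + \<Delta>\<^sub>b + \<Delta>\<^sub>a \<Delta>\<^sub>b\<close>, differences in arbitrary directions raise the degree.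
\<close>

inductive in_mfilt :: "(nat \<Rightarrow> 'a::ab_group_add) \<Rightarrow> nat \<Rightarrow> (('a \<Rightarrow> 'b::ab_group_add) \<Rightarrow> bool) \<Rightarrow> nat \<Rightarrow> ('a \<Rightarrow> 'b) \<Rightarrow> bool"
  for e r P where
  in_mfilt_zero: "in_mfilt e r P w (\<lambda>_. 0)"
| in_mfilt_term: "w \<le> (\<Sum>l<r. i l) \<Longrightarrow> P h \<Longrightarrow> in_mfilt e r P w (Delta_mono e i [0..<r] h)"
| in_mfilt_add: "in_mfilt e r P w G1 \<Longrightarrow> in_mfilt e r P w G2 \<Longrightarrow> in_mfilt e r P w (\<lambda>x. G1 x + G2 x)"

lemma in_mfilt_mono: "in_mfilt e r P w G \<Longrightarrow> w' \<le> w \<Longrightarrow> in_mfilt e r P w' G"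
proof (induction rule: in_mfilt.induct)
  case (in_mfilt_zero w) show ?case by (rule in_mfilt.in_mfilt_zero)
next
  case (in_mfilt_term w i h) thus ?case by (intro in_mfilt.in_mfilt_term) auto
next
  case (in_mfilt_add w G1 G2) thus ?case by (intro in_mfilt.in_mfilt_add) auto
qed

lemma in_mfilt_Delta_generator: assumes jr: "j < r" shows "in_mfilt e r P w G \<Longrightarrow> in_mfilt e r P (Suc w) (Delta (e j) G)"
proof (induction rule: in_mfilt.induct)
  case (in_mfilt_zero w) thus ?case by (simp add: in_mfilt.in_mfilt_zero)
next
  case (in_mfilt_term w i h)
  have "Delta (e j) (Delta_mono e i [0..<r] h) = Delta_mono e (i(j := Suc (i j))) [0..<r] h"
    using jr by (intro Delta_Delta_mono) auto
  moreover have "Suc w \<le> (\<Sum>l<r. (i(j := Suc (i j))) l)"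
    using in_mfilt_term jr sum_update_Suc[of "{..<r}" j i] by simp
  ultimately show ?case using in_mfilt_term by (simp add: in_mfilt.in_mfilt_term)
next
  case (in_mfilt_add w G1 G2) thus ?case by (simp add: Delta_plus in_mfilt.in_mfilt_add)
qed

lemma in_mfilt_Delta:
  assumes gen: "\<And>a. \<exists>c. a = (\<Sum>j<r. nsmul (c j) (e j))"
  shows "in_mfilt e r P w G \<Longrightarrow> in_mfilt e r P (Suc w) (Delta a G)"
proof -
  define S where "S = {a. \<forall>w G. in_mfilt e r P w G \<longrightarrow> in_mfilt e r P (Suc w) (Delta a G)}"
  have S0: "0 \<in> S" unfolding S_def by (simp add: Delta_0_dir in_mfilt_zero)
  have Sadd: "x \<in> S \<Longrightarrow> y \<in> S \<Longrightarrow> x + y \<in> S" for x y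
  proof -
    assume xy: "x \<in> S" "y \<in> S"
    show "x + y \<in> S" unfolding S_def
    proof (intro CollectI allI impI)
      fix w G assume G: "in_mfilt e r P w G"
      have 1: "in_mfilt e r P (Suc w) (Delta x G)" using xy G unfolding S_def by blast
      have 2: "in_mfilt e r P (Suc w) (Delta y G)" using xy G unfolding S_def by blast
      have "in_mfilt e r P (Suc (Suc w)) (Delta x (Delta y G))" using xy 2 unfolding S_def by blast
      hence 3: "in_mfilt e r P (Suc w) (Delta x (Delta y G))" by (rule in_mfilt_mono) simp
      show "in_mfilt e r P (Suc w) (Delta (x + y) G)"
        unfolding Delta_add_dir by (intro in_mfilt_add 1 2 3)
    qed
  qed
  have Se: "j < r \<Longrightarrow> e j \<in> S" for j unfolding S_def using in_mfilt_Delta_generator by blast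
  have Sn: "x \<in> S \<Longrightarrow> nsmul c x \<in> S" for x c
    by (induction c) (simp_all add: S0 nsmul_Suc Sadd)
  have Ssum: "(\<Sum>j\<in>J. nsmul (c j) (e j)) \<in> S" if "J \<subseteq> {..<r}" for J c
  proof -
    have "finite J" using that finite_subset by blast
    thus ?thesis using that
      by (induction J rule: finite_induct) (auto simp: S0 Sadd Sn Se)
  qed
  obtain c where "a = (\<Sum>j<r. nsmul (c j) (e j))" using gen by blast
  hence "a \<in> S" using Ssum[of "{..<r}" c] by simp
  thus "in_mfilt e r P w G \<Longrightarrow> in_mfilt e r P (Suc w) (Delta a G)" unfolding S_def by blast
qed

lemma in_mfilt_foldr_Delta:
  assumes gen: "\<And>a. \<exists>c. a = (\<Sum>j<r. nsmul (c j) (e j))" and Pf: "P f"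
  shows "in_mfilt e r P (length as) (foldr Delta as f)"
proof (induction as)
  case Nil
  have "Delta_mono e (\<lambda>_. 0) [0..<r] f = f" unfolding Delta_mono_def by (induction r) simp_all
  moreover have "in_mfilt e r P 0 (Delta_mono e (\<lambda>_. 0) [0..<r] f)" using Pf by (intro in_mfilt_term) auto
  ultimately show ?case by simp
next
  case (Cons a as) thus ?case using in_mfilt_Delta[OF gen] by simp
qed

lemma in_mfilt_eq_0:
  assumes "in_mfilt e r P w G" and "\<And>i h. w \<le> (\<Sum>l<r. i l) \<Longrightarrow> P h \<Longrightarrow> Delta_mono e i [0..<r] h = (\<lambda>_. 0)"
  shows "G = (\<lambda>_. 0)"
  using assms by (induction rule: in_mfilt.induct) auto

lemma diffs_vanish_if_generated:
  fixes e :: "nat \<Rightarrow> 'a::ab_group_add" and f :: "'a \<Rightarrow> 'b::ab_group_add"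
  assumes p: "prime p"
    and gen: "\<And>a. \<exists>c. a = (\<Sum>j<r. nsmul (c j) (e j))"
    and ord: "\<And>j. j < r \<Longrightarrow> nsmul (p ^ al j) (e j) = 0"
    and f: "\<And>x. nsmul (p ^ K) (f x) = 0"
    and bound: "\<And>i. n < (\<Sum>l<r. i l) \<Longrightarrow> K \<le> (\<Sum>l<r. Deltan_pexp p (al l) (i l))"
  shows "diffs_vanish n f"
  unfolding diffs_vanish_def
proof (intro allI impI)
  fix as :: "'a list" assume as: "length as = Suc n"
  define P :: "('a \<Rightarrow> 'b) \<Rightarrow> bool" where "P = (\<lambda>h. \<forall>x. nsmul (p ^ K) (h x) = 0)"
  have "in_mfilt e r P (length as) (foldr Delta as f)"
    using f unfolding P_def by (intro in_mfilt_foldr_Delta[OF gen]) auto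
  thus "foldr Delta as f = (\<lambda>_. 0)"
  proof (rule in_mfilt_eq_0)
    fix i h assume "length as \<le> (\<Sum>l<r. i l)" and "P h"
    hence "K \<le> (\<Sum>l\<leftarrow>[0..<r]. Deltan_pexp p (al l) (i l))"
      using bound as by (simp add: interv_sum_list_conv_sum_set_nat atLeast0LessThan)
    thus "Delta_mono e i [0..<r] h = (\<lambda>_. 0)"
      using \<open>P h\<close> ord unfolding P_def by (intro Delta_mono_eq_0[OF p]) auto
  qed
qed

lemma Deltan_pexp_ge:
  assumes p: "prime p" and k: "p ^ a + K * ((p - 1) * p ^ (a - 1)) \<le> k"
  shows "K \<le> Deltan_pexp p a k"
proof -
  have "(p - 1) * p ^ (a - 1) > 0" using prime_gt_1_nat[OF p] by simp
  moreover have "K * ((p - 1) * p ^ (a - 1)) div ((p - 1) * p ^ (a - 1)) \<le> (k - p ^ a) div ((p - 1) * p ^ (a - 1))"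
    using k by (intro div_le_mono) simp
  ultimately have "K \<le> (k - p ^ a) div ((p - 1) * p ^ (a - 1))" by simp
  thus ?thesis using k by (simp add: Deltan_pexp_def)
qed

lemma lincomb_nth_if_set_eq_UNIV:
  assumes "set es = UNIV" shows "\<exists>c. a = (\<Sum>j<length es. nsmul (c j) (es ! j))"
proof -
  obtain j0 where j0: "j0 < length es" "es ! j0 = a" using assms in_set_conv_nth[of a es] by blast
  have "(\<Sum>j<length es. nsmul (if j = j0 then 1 else 0) (es ! j)) = (\<Sum>j<length es. if j = j0 then es ! j else 0)"
    by (intro sum.cong) auto
  also have "\<dots> = a" using j0 by simp
  finally show ?thesis by (intro exI[of _ "\<lambda>j. if j = j0 then 1 else 0"]) simp
qed

lemma p_power_annihilates_fun:
  assumes fin: "finite (UNIV :: 'a set)" and pB: "is_p_group p TYPE('b::ab_group_add)"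
  obtains K where "\<And>x::'a. nsmul (p ^ K) (f x :: 'b) = 0"
proof -
  define kx where "kx = (\<lambda>x. SOME k. elem_order (f x) = p ^ k)"
  have kx: "elem_order (f x) = p ^ kx x" for x
    unfolding kx_def using is_p_groupD[OF pB] by (rule someI_ex)
  have "nsmul (p ^ Max (range kx)) (f x) = 0" for x
  proof -
    have "kx x \<le> Max (range kx)" using fin by (intro Max_ge) auto
    hence "p ^ Max (range kx) = p ^ (Max (range kx) - kx x) * p ^ kx x" by (simp flip: power_add)
    thus ?thesis using nsmul_elem_order[of "f x"] kx[of x] by (simp add: nsmul_mult)
  qed
  thus ?thesis using that by blast
qed

lemma fdeg_less_infinity_p_groups:
  assumes p: "prime p" and fin: "finite (UNIV :: 'a::ab_group_add set)"
    and pA: "is_p_group p TYPE('a)" and pB: "is_p_group p TYPE('b::ab_group_add)"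
  shows "fdeg (f :: 'a \<Rightarrow> 'b) < \<infinity>"
proof -
  obtain es :: "'a list" where es: "set es = UNIV" using finite_list[OF fin] by blast
  define r where "r = length es"
  define al where "al = (\<lambda>j. SOME k. elem_order (es ! j) = p ^ k)"
  have al: "elem_order (es ! j) = p ^ al j" for j
    unfolding al_def using is_p_groupD[OF pA] by (rule someI_ex)
  have gen: "\<exists>c. a = (\<Sum>j<r. nsmul (c j) (es ! j))" for a
    unfolding r_def by (rule lincomb_nth_if_set_eq_UNIV[OF es])
  obtain K where fK: "nsmul (p ^ K) (f x) = 0" for x
    using p_power_annihilates_fun[OF fin pB] by blast
  define M where "M = (\<Sum>j<r. p ^ al j + K * ((p - 1) * p ^ (al j - 1)))"
  have "diffs_vanish (r * M) f"
  proof (rule diffs_vanish_if_generated[OF p gen _ fK])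
    show "nsmul (p ^ al j) (es ! j) = 0" for j using al nsmul_elem_order by metis
    fix i assume "r * M < (\<Sum>l<r. i l)"
    moreover have "(\<Sum>l<r. i l) \<le> r * M" if "\<forall>l<r. i l \<le> M"
      using sum_bounded_above[of "{..<r}" i M] that by (simp add: mult.commute)
    ultimately obtain l where l: "l < r" "M < i l" using not_le by blast
    have "p ^ al l + K * ((p - 1) * p ^ (al l - 1)) \<le> M"
      unfolding M_def using l(1) by (intro member_le_sum) auto
    hence "K \<le> Deltan_pexp p (al l) (i l)" using l(2) by (intro Deltan_pexp_ge[OF p]) simp
    also have "\<dots> \<le> (\<Sum>l<r. Deltan_pexp p (al l) (i l))" using l(1) by (intro member_le_sum) auto
    finally show "K \<le> (\<Sum>l<r. Deltan_pexp p (al l) (i l))" .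
  qed
  thus ?thesis by (rule fdeg_less_infinity)
qed

lemma Deltan_delta_fun_ne_0:
  assumes "prime p" "a \<ge> 1" "elem_order (e::'a::ab_group_add) = p ^ a"
    and "is_p_group p TYPE('b::ab_group_add)" and "nsmul (p ^ m) (b::'b) \<noteq> 0"
  shows "(Delta e ^^ (p ^ a - 1 + m * ((p - 1) * p ^ (a - 1)))) (delta_fun 0 b) e \<noteq> 0"
proof -
  interpret delta_filtration e p a b using assms by unfold_locales auto
  show ?thesis using Deltan_delta_fun_nonzero[OF assms(5)] unfolding N_def L_def .
qed

lemma delta_AB_infinite_exponent:
  assumes p: "prime p" and pA: "is_p_group p TYPE('a::ab_group_add)"
    and pB: "is_p_group p TYPE('b::ab_group_add)" and ntA: "\<exists>a::'a. a \<noteq> 0"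
    and ie: "infinite_exponent TYPE('b)"
  shows "delta_AB TYPE('a) TYPE('b) = \<infinity>"
proof (rule delta_AB_infinite)
  fix n
  obtain a0 :: 'a where a0: "a0 \<noteq> 0" using ntA by blast
  obtain al where al: "elem_order a0 = p ^ al" using is_p_groupD[OF pA] by blast
  have al1: "al \<ge> 1" using al a0 elem_order_eq_1_iff by (cases al) auto
  have "p ^ n > 0" using prime_gt_0_nat[OF p] by simp
  then obtain b :: 'b where b: "nsmul (p ^ n) b \<noteq> 0" using ie unfolding infinite_exponent_def by blast
  define k where "k = p ^ al - 1 + n * ((p - 1) * p ^ (al - 1))"
  have "(Delta a0 ^^ k) (delta_fun 0 b) a0 \<noteq> 0"
    unfolding k_def by (rule Deltan_delta_fun_ne_0[OF p al1 al pB b])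
  hence nz: "foldr Delta (replicate k a0) (delta_fun 0 b) a0 \<noteq> 0" by (simp add: foldr_replicate_Delta)
  have "p ^ 1 \<le> p ^ al" using al1 prime_gt_0_nat[OF p] by (intro power_increasing) auto
  hence two: "p ^ al \<ge> 2" using prime_ge_2_nat[OF p] by simp
  have "(p - 1) * p ^ (al - 1) \<ge> 1" using prime_gt_1_nat[OF p] by simp
  hence "n \<le> n * ((p - 1) * p ^ (al - 1))" by simp
  hence le: "n \<le> k - 1" unfolding k_def using two by linarith
  have "length (replicate k a0) = Suc (k - 1)" unfolding k_def using two by simp
  hence "\<not> diffs_vanish (k - 1) (delta_fun (0::'a) b)" using nz by (rule not_diffs_vanishI)
  thus "\<exists>f::'a \<Rightarrow> 'b. \<not> diffs_vanish n f" using diffs_vanish_mono le by blast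
qed

section \<open>Finite \<open>p\<close>-groups of finite exponent\<close>

lemma Deltan_pexp_bound:
  assumes p: "prime p" and al: "al \<le> a0" and L0: "L0 = (p - 1) * p ^ (a0 - 1)"
  shows "k + 1 \<le> Deltan_pexp p al k * L0 + p ^ al"
proof (cases "k < p ^ al")
  case True thus ?thesis by (simp add: Deltan_pexp_def)
next
  case False
  define Ll where "Ll = (p - 1) * p ^ (al - 1)"
  have Llp: "Ll > 0" unfolding Ll_def using prime_gt_1_nat[OF p] by simp
  have LL: "Ll \<le> L0" unfolding Ll_def L0 using al prime_gt_0_nat[OF p]
    by (intro mult_left_mono power_increasing) auto
  define q where "q = (k - p ^ al) div Ll"
  have "k - p ^ al = q * Ll + (k - p ^ al) mod Ll" unfolding q_def by simp
  moreover have "(k - p ^ al) mod Ll < Ll" using Llp by simp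
  ultimately have "k - p ^ al + 1 \<le> Suc q * Ll" by simp
  also have "\<dots> \<le> Suc q * L0" using LL by (rule mult_le_mono2)
  finally have "k - p ^ al + 1 \<le> Suc q * L0" .
  moreover have "Deltan_pexp p al k = Suc q" using False unfolding Deltan_pexp_def q_def Ll_def by simp
  ultimately show ?thesis using False by simp
qed

lemma sum_Deltan_pexp_ge:
  fixes r :: nat
  assumes p: "prime p"
    and al: "\<And>l. l < r \<Longrightarrow> al l \<le> al 0"
    and sum: "Suc ((\<Sum>l<r. (p ^ al l - 1)) + (\<beta> - 1) * ((p - 1) * p ^ (al 0 - 1))) \<le> (\<Sum>l<r. i l)"
  shows "\<beta> \<le> (\<Sum>l<r. Deltan_pexp p (al l) (i l))"
proof -
  define L0 where "L0 = (p - 1) * p ^ (al 0 - 1)"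
  have L0p: "L0 > 0" unfolding L0_def using prime_gt_1_nat[OF p] by simp
  define T where "T = (\<Sum>l<r. Deltan_pexp p (al l) (i l))"
  have per: "\<And>l. l < r \<Longrightarrow> i l + 1 \<le> Deltan_pexp p (al l) (i l) * L0 + p ^ al l"
    using Deltan_pexp_bound[OF p al L0_def] by blast
  have "(\<Sum>l<r. i l + 1) \<le> (\<Sum>l<r. Deltan_pexp p (al l) (i l) * L0 + p ^ al l)"
    using per by (intro sum_mono) auto
  moreover have e1: "(\<Sum>l<r. i l + 1) = (\<Sum>l<r. i l) + r" by (induction r) auto
  moreover have e2: "(\<Sum>l<r. Deltan_pexp p (al l) (i l) * L0 + p ^ al l) = T * L0 + (\<Sum>l<r. p ^ al l)"
    by (simp add: sum.distrib sum_distrib_right T_def)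
  ultimately have s1: "(\<Sum>l<r. i l) + r \<le> T * L0 + (\<Sum>l<r. p ^ al l)" by simp
  have "(\<Sum>l<r. (p ^ al l - 1)) + r = (\<Sum>l<r. (p ^ al l - 1) + 1)" by (induction r) auto
  also have "\<dots> = (\<Sum>l<r. p ^ al l)" using prime_gt_0_nat[OF p] by (intro sum.cong) auto
  finally have s2: "(\<Sum>l<r. (p ^ al l - 1)) + r = (\<Sum>l<r. p ^ al l)" .
  have "(\<beta> - 1) * L0 + 1 \<le> T * L0" using s1 s2 sum unfolding L0_def by linarith
  hence "(\<beta> - 1) * L0 < T * L0" by linarith
  hence "\<beta> - 1 < T" using mult_less_cancel2 by blast
  thus ?thesis unfolding T_def by simp
qed

text \<open>
  \<open>h\<close> identifies \<open>A\<close> with \<open>\<Prod>\<^sub>i\<^sub><\<^sub>r \<int>/N\<^sub>i\<close>, coordinates being represented in \<open>[0, N\<^sub>i)\<close> as in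
  \<open>integer_mod_group\<close>; \<open>e j\<close> is the \<open>j\<close>-th unit vector.
\<close>

locale cyclic_coordinates =
  fixes h :: "'a::ab_group_add \<Rightarrow> (nat \<Rightarrow> int)" and N :: "nat \<Rightarrow> nat" and r :: nat
  assumes hom: "\<And>x y. h (x + y) = (\<lambda>i\<in>{..<r}. (h x i + h y i) mod int (N i))"
      and bij: "bij_betw h UNIV (\<Pi>\<^sub>E i\<in>{..<r}. {0..<int (N i)})"
      and N2: "\<And>i. i < r \<Longrightarrow> N i \<ge> 2"
begin

lemma h_range: "i < r \<Longrightarrow> 0 \<le> h x i \<and> h x i < int (N i)"
  using bij_betwE[OF bij] by (auto simp: PiE_iff)

lemma h_ext: "i \<ge> r \<Longrightarrow> h x i = undefined"
  using bij_betwE[OF bij] by (auto simp: PiE_iff extensional_def)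

lemma h_inj: "h x = h y \<Longrightarrow> x = y"
  using bij_betw_imp_inj_on[OF bij] by (auto simp: inj_on_def)

lemma h_eqI: "(\<And>i. i < r \<Longrightarrow> h x i = h y i) \<Longrightarrow> x = y"
proof -
  assume "\<And>i. i < r \<Longrightarrow> h x i = h y i"
  hence "h x = h y" using h_ext by (metis ext not_le)
  thus "x = y" by (rule h_inj)
qed

lemma h_add: "i < r \<Longrightarrow> h (x + y) i = (h x i + h y i) mod int (N i)"
  using hom by simp

lemma h_zero: "i < r \<Longrightarrow> h 0 i = 0"
proof -
  assume i: "i < r"
  have "h 0 i = (h 0 i + h 0 i) mod int (N i)" using h_add[OF i, of 0 0] by simp
  moreover have "0 \<le> h 0 i" "h 0 i < int (N i)" using h_range[OF i] by auto
  ultimately have "(h 0 i + h 0 i) mod int (N i) = h 0 i mod int (N i)" by simp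
  hence "int (N i) dvd (h 0 i + h 0 i) - h 0 i" by (simp only: mod_eq_dvd_iff)
  hence d: "int (N i) dvd h 0 i" by simp
  show "h 0 i = 0"
  proof (rule ccontr)
    assume "h 0 i \<noteq> 0"
    hence "0 < h 0 i" using h_range[OF i, of 0] by simp
    hence "int (N i) \<le> h 0 i" using d by (simp add: zdvd_imp_le)
    thus False using h_range[OF i, of 0] by simp
  qed
qed

lemma h_nsmul: "i < r \<Longrightarrow> h (nsmul c x) i = (int c * h x i) mod int (N i)"
proof (induction c)
  case 0 thus ?case using h_zero by simp
next
  case (Suc c)
  have "h (nsmul (Suc c) x) i = (h x i + h (nsmul c x) i) mod int (N i)"
    by (simp add: nsmul_Suc h_add[OF Suc.prems])
  also have "\<dots> = (h x i + int c * h x i) mod int (N i)" using Suc by (simp add: mod_add_right_eq)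
  finally show ?case by (simp add: algebra_simps)
qed

definition unit_vec :: "nat \<Rightarrow> nat \<Rightarrow> int" where "unit_vec j = (\<lambda>i\<in>{..<r}. if i = j then 1 else 0)"
definition e :: "nat \<Rightarrow> 'a" where "e j = inv_into UNIV h (unit_vec j)"

lemma h_e: "j < r \<Longrightarrow> h (e j) = unit_vec j"
proof -
  assume j: "j < r"
  have one: "\<And>i. i < r \<Longrightarrow> (1::int) < int (N i)" using N2 by force
  have "unit_vec j \<in> (\<Pi>\<^sub>E i\<in>{..<r}. {0..<int (N i)})"
    unfolding unit_vec_def using one N2 by (force simp: PiE_iff)
  hence "unit_vec j \<in> h ` UNIV" using bij_betw_imp_surj_on[OF bij] by simp
  thus ?thesis unfolding e_def by (rule f_inv_into_f)
qed

lemma h_e_i: "j < r \<Longrightarrow> i < r \<Longrightarrow> h (e j) i = (if i = j then 1 else 0)"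
  using h_e by (simp add: unit_vec_def)

lemma h_sum: "finite J \<Longrightarrow> i < r \<Longrightarrow>
  h (\<Sum>j\<in>J. X j) i = (\<Sum>j\<in>J. h (X j) i) mod int (N i)"
proof (induction J rule: finite_induct)
  case empty thus ?case using h_zero by simp
next
  case (insert j J)
  have "h (\<Sum>j\<in>insert j J. X j) i = (h (X j) i + h (\<Sum>j\<in>J. X j) i) mod int (N i)"
    using insert by (simp add: h_add)
  also have "\<dots> = (h (X j) i + (\<Sum>j\<in>J. h (X j) i)) mod int (N i)"
    using insert by (simp add: mod_add_right_eq)
  finally show ?case using insert by simp
qed

lemma h_lincomb: "J \<subseteq> {..<r} \<Longrightarrow> i < r \<Longrightarrow>
  h (\<Sum>j\<in>J. nsmul (c j) (e j)) i = (if i \<in> J then int (c i) mod int (N i) else 0)"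
proof -
  assume J: "J \<subseteq> {..<r}" and i: "i < r"
  have fJ: "finite J" using J finite_subset by blast
  have "h (\<Sum>j\<in>J. nsmul (c j) (e j)) i = (\<Sum>j\<in>J. h (nsmul (c j) (e j)) i) mod int (N i)"
    by (rule h_sum[OF fJ i])
  also have "(\<Sum>j\<in>J. h (nsmul (c j) (e j)) i) = (\<Sum>j\<in>J. if j = i then int (c i) mod int (N i) else 0)"
    using J i by (intro sum.cong) (auto simp: h_nsmul h_e_i)
  also have "\<dots> = (if i \<in> J then int (c i) mod int (N i) else 0)"
    using fJ by (simp add: sum.delta')
  finally show ?thesis by simp
qed

lemma lincomb_e: "\<exists>c. a = (\<Sum>j<r. nsmul (c j) (e j))"
proof -
  have "a = (\<Sum>j<r. nsmul (nat (h a j)) (e j))"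
  proof (rule h_eqI)
    fix i assume i: "i < r"
    have "h (\<Sum>j<r. nsmul (nat (h a j)) (e j)) i = int (nat (h a i)) mod int (N i)"
      using h_lincomb[of "{..<r}" i "\<lambda>j. nat (h a j)"] i by simp
    also have "\<dots> = h a i" using h_range[OF i, of a] by simp
    finally show "h a i = h (\<Sum>j<r. nsmul (nat (h a j)) (e j)) i" by simp
  qed
  thus ?thesis by (rule exI[of _ "\<lambda>j. nat (h a j)"])
qed

lemma nsmul_e_eq_0_iff: "j < r \<Longrightarrow> nsmul c (e j) = 0 \<longleftrightarrow> N j dvd c"
proof -
  assume j: "j < r"
  have "nsmul c (e j) = 0 \<longleftrightarrow> (\<forall>i<r. h (nsmul c (e j)) i = h 0 i)"
    using h_eqI by auto
  also have "\<dots> \<longleftrightarrow> int c mod int (N j) = 0"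
    using j by (auto simp: h_nsmul h_e_i h_zero)
  also have "int c mod int (N j) = int (c mod N j)" by (rule of_nat_mod[symmetric])
  also have "(int (c mod N j) = 0) \<longleftrightarrow> N j dvd c" by (simp add: dvd_eq_mod_eq_0)
  finally show ?thesis .
qed

lemma elem_order_e: "j < r \<Longrightarrow> elem_order (e j) = N j"
proof -
  assume j: "j < r"
  show ?thesis
  proof (rule elem_order_eqI)
    show "N j > 0" using N2[OF j] by simp
    show "nsmul (N j) (e j) = 0" using nsmul_e_eq_0_iff[OF j] by simp
    fix k assume "0 < k" "k < N j"
    thus "nsmul k (e j) \<noteq> 0" using nsmul_e_eq_0_iff[OF j] by (simp add: nat_dvd_not_less)
  qed
qed

end

lemma cyclic_coordinates_if_iso:
  assumes iso: "(add_grp :: 'a::ab_group_add monoid) \<cong> product_group {..<r} (\<lambda>i. integer_mod_group (N i))"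
    and N2: "\<And>i. i < r \<Longrightarrow> N i \<ge> 2"
  shows "\<exists>h. cyclic_coordinates (h :: 'a \<Rightarrow> nat \<Rightarrow> int) N r"
proof -
  obtain h where h: "h \<in> iso (add_grp :: 'a monoid) (product_group {..<r} (\<lambda>i. integer_mod_group (N i)))"
    using iso unfolding is_iso_def by blast
  have N0: "\<And>i. i < r \<Longrightarrow> N i \<noteq> 0" using N2 by (metis not_numeral_le_zero le_zero_eq)
  have car: "carrier (product_group {..<r} (\<lambda>i. integer_mod_group (N i))) = (\<Pi>\<^sub>E i\<in>{..<r}. {0..<int (N i)})"
    unfolding carrier_product_group by (rule PiE_cong) (use N0 in \<open>simp add: carrier_integer_mod_group\<close>)
  have bij: "bij_betw h UNIV (\<Pi>\<^sub>E i\<in>{..<r}. {0..<int (N i)})"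
    using h car unfolding iso_def by (simp add: add_grp_def)
  have hom: "\<And>x y. h (x + y) = (\<lambda>i\<in>{..<r}. (h x i + h y i) mod int (N i))"
  proof -
    fix x y :: 'a
    have "h (x \<otimes>\<^bsub>(add_grp :: 'a monoid)\<^esub> y) = h x \<otimes>\<^bsub>product_group {..<r} (\<lambda>i. integer_mod_group (N i))\<^esub> h y"
      using h unfolding iso_def hom_def by (simp add: add_grp_def)
    moreover have "x \<otimes>\<^bsub>(add_grp :: 'a monoid)\<^esub> y = x + y" by (simp add: add_grp_def)
    ultimately show "h (x + y) = (\<lambda>i\<in>{..<r}. (h x i + h y i) mod int (N i))"
      using N0 by (auto simp: product_group_def integer_mod_group_def)
  qed
  show ?thesis using hom bij N2 by (intro exI[of _ h]) (unfold_locales)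
qed

context cyclic_coordinates
begin

lemma h_add_nsmul_e: "j < r \<Longrightarrow> l < r \<Longrightarrow> h (x + nsmul c (e l)) j = (h x j + (if j = l then int c else 0)) mod int (N j)"
  by (simp add: h_add h_nsmul h_e_i mod_add_right_eq)

lemma h_add_nsmul_e_other: "j < r \<Longrightarrow> l < r \<Longrightarrow> j \<noteq> l \<Longrightarrow> h (x + nsmul c (e l)) j = h x j"
  using h_add_nsmul_e[of j l x c] h_range[of j x] by simp

lemma h_add_sum_list_other:
  "set ls \<subseteq> {..<r} \<Longrightarrow> j < r \<Longrightarrow> j \<notin> set ls \<Longrightarrow>
   h (y + (\<Sum>l\<leftarrow>ls. nsmul (c l) (e l))) j = h y j"
proof (induction ls arbitrary: y)
  case Nil thus ?case by simp
next
  case (Cons l ls)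
  have eq: "y + (\<Sum>l\<leftarrow>l # ls. nsmul (c l) (e l)) = (y + nsmul (c l) (e l)) + (\<Sum>l\<leftarrow>ls. nsmul (c l) (e l))"
    by (simp add: add.assoc)
  have "h (y + (\<Sum>l\<leftarrow>l # ls. nsmul (c l) (e l))) j = h (y + nsmul (c l) (e l)) j"
    unfolding eq by (rule Cons.IH) (use Cons.prems in auto)
  also have "\<dots> = h y j" using Cons by (intro h_add_nsmul_e_other) auto
  finally show ?case .
qed

definition axis where "axis = {x. \<forall>j. 1 \<le> j \<and> j < r \<longrightarrow> h x j = 0}"

lemma Deltan_e0_vanish_off_axis:
  assumes r: "r \<ge> 1" and g: "\<And>x. x \<notin> axis \<Longrightarrow> g x = 0"
  shows "x \<notin> axis \<Longrightarrow> (Delta (e 0) ^^ k) g x = 0"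
proof (induction k arbitrary: x)
  case 0 thus ?case using g by simp
next
  case (Suc k)
  have "x + e 0 \<notin> axis"
  proof
    assume "x + e 0 \<in> axis"
    moreover obtain j where j: "1 \<le> j" "j < r" "h x j \<noteq> 0" using Suc.prems unfolding axis_def by blast
    moreover have "h (x + nsmul 1 (e 0)) j = h x j" using j r by (intro h_add_nsmul_e_other) auto
    ultimately show False unfolding axis_def by simp
  qed
  thus ?case using Suc by (simp add: Delta_apply)
qed

lemma add_nsmul_e_notin_axis:
  assumes j: "1 \<le> j" "j < r" and x: "h x j = 1" and c: "c < N j - 1"
    and ls: "set ls \<subseteq> {..<r}" "j \<notin> set ls"
  shows "x + nsmul c (e j) + (\<Sum>l\<leftarrow>ls. nsmul (N l - 1) (e l)) \<notin> axis"
proof -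
  have "h (x + nsmul c (e j) + (\<Sum>l\<leftarrow>ls. nsmul (N l - 1) (e l))) j = h (x + nsmul c (e j)) j"
    using ls j by (intro h_add_sum_list_other) auto
  also have "\<dots> = 1 + int c" using h_add_nsmul_e[of j j x c] j x c by simp
  finally show ?thesis unfolding axis_def using j by force
qed

lemma foldr_Delta_off_axis:
  assumes phi: "\<And>x. x \<notin> axis \<Longrightarrow> phi x = 0"
  shows "distinct ls \<Longrightarrow> set ls \<subseteq> {1..<r} \<Longrightarrow> (\<forall>j\<in>set ls. h x j = 1) \<Longrightarrow>
    foldr Delta (concat (map (\<lambda>j. replicate (N j - 1) (e j)) ls)) phi x =
    phi (x + (\<Sum>j\<leftarrow>ls. nsmul (N j - 1) (e j)))"
proof (induction ls arbitrary: x)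
  case Nil thus ?case by simp
next
  case (Cons j ls)
  define psi where "psi = foldr Delta (concat (map (\<lambda>j. replicate (N j - 1) (e j)) ls)) phi"
  have jr: "1 \<le> j" "j < r" using Cons.prems(2) by auto
  have jls: "j \<notin> set ls" using Cons.prems(1) by simp
  have lsr: "set ls \<subseteq> {..<r}" using Cons.prems(2) by auto
  have IH: "\<And>y. (\<forall>l\<in>set ls. h y l = 1) \<Longrightarrow> psi y = phi (y + (\<Sum>l\<leftarrow>ls. nsmul (N l - 1) (e l)))"
    unfolding psi_def using Cons by auto
  have keep: "\<And>c. \<forall>l\<in>set ls. h (x + nsmul c (e j)) l = 1"
  proof
    fix c l assume l: "l \<in> set ls"
    hence "l < r" "l \<noteq> j" using Cons.prems(2) jls by auto
    hence "h (x + nsmul c (e j)) l = h x l" using jr by (intro h_add_nsmul_e_other) auto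
    thus "h (x + nsmul c (e j)) l = 1" using Cons.prems(3) l by simp
  qed
  have "foldr Delta (concat (map (\<lambda>j. replicate (N j - 1) (e j)) (j # ls))) phi x =
        foldr Delta (replicate (N j - 1) (e j)) psi x" unfolding psi_def by simp
  also have "\<dots> = psi (x + sum_list (replicate (N j - 1) (e j)))"
  proof (rule foldr_Delta_eq_full_term, intro ballI impI)
    fix ys assume ys: "ys \<in> set (subseqs (replicate (N j - 1) (e j)))" "ys \<noteq> replicate (N j - 1) (e j)"
    obtain c where c: "c \<le> N j - 1" "ys = replicate c (e j)" using subseqs_replicate[OF ys(1)] by blast
    have cl: "c < N j - 1" using c ys(2) by (cases "c = N j - 1") auto
    have "psi (x + sum_list ys) = phi (x + nsmul c (e j) + (\<Sum>l\<leftarrow>ls. nsmul (N l - 1) (e l)))"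
      using IH[OF keep[of c]] c by (simp add: sum_list_replicate_nsmul)
    also have "\<dots> = 0"
      using phi add_nsmul_e_notin_axis[OF jr Cons.prems(3)[rule_format, of j] cl lsr jls] by simp
    finally show "psi (x + sum_list ys) = 0" .
  qed
  also have "\<dots> = phi (x + nsmul (N j - 1) (e j) + (\<Sum>l\<leftarrow>ls. nsmul (N l - 1) (e l)))"
    using IH[OF keep[of "N j - 1"]] by (simp add: sum_list_replicate_nsmul)
  also have "\<dots> = phi (x + (\<Sum>l\<leftarrow>j # ls. nsmul (N l - 1) (e l)))" by (simp add: add.assoc)
  finally show ?case .
qed

lemma h_sum_e: "i < r \<Longrightarrow> h (\<Sum>j<r. e j) i = 1"
  using h_lincomb[of "{..<r}" i "\<lambda>_. 1"] N2[of i] by simp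

lemma sum_e_plus_sum_list_eq_e0:
  assumes r: "r \<ge> 1"
  shows "(\<Sum>j<r. e j) + (\<Sum>j\<leftarrow>[1..<r]. nsmul (N j - 1) (e j)) = e 0"
proof (rule h_eqI)
  fix i assume i: "i < r"
  have S: "(\<Sum>j\<leftarrow>[1..<r]. nsmul (N j - 1) (e j)) = (\<Sum>j\<in>{1..<r}. nsmul (N j - 1) (e j))"
    by (simp add: sum_list_distinct_conv_sum_set)
  have hS: "h (\<Sum>j\<in>{1..<r}. nsmul (N j - 1) (e j)) i = (if i \<in> {1..<r} then int (N i - 1) mod int (N i) else 0)"
    using i by (intro h_lincomb) auto
  have "h ((\<Sum>j<r. e j) + (\<Sum>j\<leftarrow>[1..<r]. nsmul (N j - 1) (e j))) i =
        (h (\<Sum>j<r. e j) i + h (\<Sum>j\<in>{1..<r}. nsmul (N j - 1) (e j)) i) mod int (N i)"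
    unfolding S by (rule h_add[OF i])
  also have "\<dots> = (1 + (if i \<in> {1..<r} then int (N i - 1) mod int (N i) else 0)) mod int (N i)"
    by (simp only: h_sum_e[OF i] hS)
  also have "\<dots> = (if i = 0 then 1 else 0)"
  proof (cases "i = 0")
    case True thus ?thesis using N2[OF i] by simp
  next
    case False
    have n1: "int (N i - 1) = int (N i) - 1" using N2[OF i] by simp
    have "(1 + int (N i - 1) mod int (N i)) mod int (N i) = (1 + int (N i - 1)) mod int (N i)"
      by (simp add: mod_add_right_eq)
    also have "\<dots> = 0" using n1 by simp
    finally show ?thesis using False i by simp
  qed
  also have "\<dots> = h (e 0) i" using h_e_i[OF _ i, of 0] r by simp
  finally show "h ((\<Sum>j<r. e j) + (\<Sum>j\<leftarrow>[1..<r]. nsmul (N j - 1) (e j))) i = h (e 0) i" .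
qed

text \<open>
  Lower bound: \<open>\<phi> = \<Delta>\<^sub>e\<^sub>0\<^sup>k \<delta>\<^sub>0\<^sub>,\<^sub>b\<close> is supported on the axis \<open>\<langle>e\<^sub>0\<rangle>\<close> and \<open>\<phi>(e\<^sub>0) \<noteq> 0\<close>.  At
  \<open>x\<^sub>0 = \<Sum> e\<^sub>j\<close>, each further \<open>\<Delta>\<^sub>e\<^sub>j\<^sup>N\<^sup>j\<^sup>-\<^sup>1\<close> (\<open>j \<ge> 1\<close>) only sees the term that moves the
  \<open>j\<close>-th coordinate from \<open>1\<close> to \<open>0\<close>, so the result at \<open>x\<^sub>0\<close> is \<open>\<phi>(e\<^sub>0)\<close>.
\<close>

lemma not_diffs_vanish_delta_fun:
  assumes p: "prime p" and r1: "r \<ge> 1" and a: "a \<ge> 1" and N0: "N 0 = p ^ a"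
    and pB: "is_p_group p TYPE('b::ab_group_add)" and b: "nsmul (p ^ m) (b::'b) \<noteq> 0"
  shows "\<not> diffs_vanish ((\<Sum>j<r. N j - 1) + m * ((p - 1) * p ^ (a - 1)) - 1) (delta_fun (0::'a) b)"
proof -
  define k0 where "k0 = p ^ a - 1 + m * ((p - 1) * p ^ (a - 1))"
  define phi where "phi = (Delta (e 0) ^^ k0) (delta_fun 0 b)"
  have phi_e0: "phi (e 0) \<noteq> 0"
    unfolding phi_def k0_def using elem_order_e[of 0] r1 N0 by (intro Deltan_delta_fun_ne_0[OF p a _ pB b]) simp
  have "0 \<in> axis" unfolding axis_def using h_zero by auto
  hence phi_supp: "phi x = 0" if "x \<notin> axis" for x
    unfolding phi_def using that by (intro Deltan_e0_vanish_off_axis[OF r1]) (auto simp: delta_fun_def)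
  define rest where "rest = concat (map (\<lambda>j. replicate (N j - 1) (e j)) [1..<r])"
  define lst where "lst = replicate k0 (e 0) @ rest"
  have "foldr Delta lst (delta_fun 0 b) = foldr Delta (replicate k0 (e 0)) (foldr Delta rest (delta_fun 0 b))"
    unfolding lst_def by simp
  also have "\<dots> = foldr Delta rest phi"
    unfolding phi_def by (simp only: foldr_Delta_commute foldr_replicate_Delta)
  finally have fl: "foldr Delta lst (delta_fun 0 b) = foldr Delta rest phi" .
  have "foldr Delta rest phi (\<Sum>j<r. e j) = phi (e 0)"
    unfolding rest_def sum_e_plus_sum_list_eq_e0[OF r1, symmetric]
    by (rule foldr_Delta_off_axis[OF phi_supp]) (auto simp: h_sum_e)
  hence nz: "foldr Delta lst (delta_fun 0 b) (\<Sum>j<r. e j) \<noteq> 0" using fl phi_e0 by simp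
  have "length rest = (\<Sum>j\<in>{1..<r}. N j - 1)"
    unfolding rest_def by (simp add: length_concat comp_def sum_list_distinct_conv_sum_set)
  moreover have "{..<r} = insert 0 {1..<r}" using r1 by auto
  hence sum_eq: "(\<Sum>j<r. N j - 1) = (N 0 - 1) + (\<Sum>j\<in>{1..<r}. N j - 1)" by simp
  ultimately have "length lst = (\<Sum>j<r. N j - 1) + m * ((p - 1) * p ^ (a - 1))"
    unfolding lst_def k0_def using N0 by simp
  moreover have "(\<Sum>j<r. N j - 1) \<ge> 1" using sum_eq N2[of 0] r1 by linarith
  ultimately have "length lst = Suc ((\<Sum>j<r. N j - 1) + m * ((p - 1) * p ^ (a - 1)) - 1)"
    by linarith
  thus ?thesis using nz by (rule not_diffs_vanishI)
qed

end

lemma has_exponent_prime_power_witness: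
  assumes p: "prime p" and ex: "has_exponent TYPE('b::ab_group_add) (p ^ \<beta>)"
    and ntB: "\<exists>b::'b. b \<noteq> 0"
  shows "\<beta> \<ge> 1" and "\<exists>b::'b. nsmul (p ^ (\<beta> - 1)) b \<noteq> 0"
proof -
  have kill: "nsmul (p ^ \<beta>) x = 0" for x :: 'b using ex by (simp add: has_exponent_def)
  show "\<beta> \<ge> 1"
  proof (rule ccontr)
    assume "\<not> \<beta> \<ge> 1"
    hence "\<beta> = 0" by simp
    hence "x = 0" for x :: 'b using kill[of x] by simp
    thus False using ntB by blast
  qed
  hence "p ^ (\<beta> - 1) < p ^ \<beta>" using prime_gt_1_nat[OF p] by (intro power_strict_increasing) auto
  moreover have "p ^ (\<beta> - 1) > 0" using prime_gt_0_nat[OF p] by simp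
  ultimately show "\<exists>b::'b. nsmul (p ^ (\<beta> - 1)) b \<noteq> 0"
    using ex unfolding has_exponent_def by (blast dest: leD)
qed

lemma delta_AB_finite_exponent:
  fixes \<alpha> :: "nat list"
  assumes p: "prime p"
    and iso: "(add_grp :: 'a::ab_group_add monoid) \<cong>
                product_group {..<length \<alpha>} (\<lambda>i. integer_mod_group (p ^ (\<alpha> ! i)))"
    and sorted: "sorted_wrt (\<ge>) \<alpha>" and \<alpha>1: "\<forall>i<length \<alpha>. 1 \<le> \<alpha> ! i"
    and pB: "is_p_group p TYPE('b::ab_group_add)" and ex: "has_exponent TYPE('b) (p ^ \<beta>)"
    and ntA: "\<exists>a::'a. a \<noteq> 0" and ntB: "\<exists>b::'b. b \<noteq> 0"
  shows "delta_AB TYPE('a) TYPE('b) =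
           ereal (real ((\<Sum>j<length \<alpha>. (p ^ (\<alpha> ! j) - 1)) + (\<beta> - 1) * (p - 1) * p ^ (\<alpha> ! 0 - 1)))"
proof -
  define r where "r = length \<alpha>"
  define D where "D = (\<Sum>j<r. p ^ (\<alpha> ! j) - 1) + (\<beta> - 1) * ((p - 1) * p ^ (\<alpha> ! 0 - 1))"
  have N2: "p ^ (\<alpha> ! i) \<ge> 2" if "i < r" for i
  proof -
    have "p ^ 1 \<le> p ^ (\<alpha> ! i)"
      using \<alpha>1 that prime_gt_0_nat[OF p] unfolding r_def by (intro power_increasing) auto
    thus ?thesis using prime_ge_2_nat[OF p] by simp
  qed
  obtain h :: "'a \<Rightarrow> nat \<Rightarrow> int" where "cyclic_coordinates h (\<lambda>i. p ^ (\<alpha> ! i)) r"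
    using cyclic_coordinates_if_iso[OF iso[folded r_def] N2] by blast
  then interpret cyclic_coordinates h "\<lambda>i. p ^ (\<alpha> ! i)" r .
  have r1: "r \<ge> 1"
  proof (rule ccontr)
    assume "\<not> r \<ge> 1"
    hence "a = 0" for a :: 'a by (intro h_eqI) simp
    thus False using ntA by blast
  qed
  have \<beta>1: "\<beta> \<ge> 1" and "\<exists>b::'b. nsmul (p ^ (\<beta> - 1)) b \<noteq> 0"
    using has_exponent_prime_power_witness[OF p ex ntB] by blast+
  then obtain b :: 'b where b: "nsmul (p ^ (\<beta> - 1)) b \<noteq> 0" by blast
  have upper: "diffs_vanish D f" for f :: "'a \<Rightarrow> 'b"
  proof (rule diffs_vanish_if_generated[OF p lincomb_e])
    show "nsmul (p ^ (\<alpha> ! j)) (e j) = 0" if "j < r" for j using nsmul_e_eq_0_iff that by simp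
    show "nsmul (p ^ \<beta>) (f x) = 0" for x using ex by (simp add: has_exponent_def)
    have "\<alpha> ! l \<le> \<alpha> ! 0" if "l < r" for l
      using sorted_wrt_nth_less[OF sorted, of 0 l] that unfolding r_def by (cases "l = 0") auto
    thus "\<beta> \<le> (\<Sum>l<r. Deltan_pexp p (\<alpha> ! l) (i l))" if "D < (\<Sum>l<r. i l)" for i
      using that unfolding D_def by (intro sum_Deltan_pexp_ge[OF p]) auto
  qed
  have "\<alpha> ! 0 \<ge> 1" using \<alpha>1 r1 unfolding r_def by (metis One_nat_def Suc_le_lessD)
  hence "\<not> diffs_vanish (D - 1) (delta_fun (0::'a) b)"
    unfolding D_def by (rule not_diffs_vanish_delta_fun[OF p r1 _ refl pB b])
  moreover have "p ^ (\<alpha> ! 0) - 1 \<le> (\<Sum>j<r. p ^ (\<alpha> ! j) - 1)"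
    using r1 by (intro member_le_sum) auto
  hence "D > 0" unfolding D_def using N2[of 0] r1 by linarith
  ultimately have "delta_AB TYPE('a) TYPE('b) = ereal (real D)" by (intro delta_AB_eqI[OF upper])
  thus ?thesis unfolding D_def r_def by (simp add: mult.assoc)
qed

theorem theorem3p8:
  assumes ntA: "\<exists>a::'a::ab_group_add. a \<noteq> 0"
      and ntB: "\<exists>b::'b::ab_group_add. b \<noteq> 0"
  shows
   "(infinite (UNIV :: 'a set) \<longrightarrow>
       (\<forall>b::'b. b \<noteq> 0 \<longrightarrow> fdeg (delta_fun (0::'a) b) = \<infinity>) \<and>
       delta_AB TYPE('a) TYPE('b) = \<infinity>)
  \<and> ((\<not> (\<exists>p::nat. prime p \<and> finite (UNIV :: 'a set) \<and>
            is_p_group p TYPE('a) \<and> is_p_group p TYPE('b))) \<longrightarrow>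
       (\<exists>b::'b. fdeg (delta_fun (0::'a) b) = \<infinity>) \<and>
       delta_AB TYPE('a) TYPE('b) = \<infinity>)
  \<and> (\<forall>(p::nat) (\<alpha>::nat list) (\<beta>::nat).
       prime p \<and> finite (UNIV :: 'a set) \<and> is_p_group p TYPE('a) \<and>
       (add_grp :: 'a monoid) \<cong>
          product_group {..<length \<alpha>} (\<lambda>i. integer_mod_group (p ^ (\<alpha> ! i))) \<and>
       sorted_wrt (\<ge>) \<alpha> \<and> (\<forall>i<length \<alpha>. 1 \<le> \<alpha> ! i) \<and>
       is_p_group p TYPE('b) \<and> has_exponent TYPE('b) (p ^ \<beta>)
       \<longrightarrow> delta_AB TYPE('a) TYPE('b) =
             ereal (real ((\<Sum>j<length \<alpha>. (p ^ (\<alpha> ! j) - 1))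
                          + (\<beta> - 1) * (p - 1) * p ^ (\<alpha> ! 0 - 1))))
  \<and> (\<forall>p::nat.
       prime p \<and> finite (UNIV :: 'a set) \<and> is_p_group p TYPE('a) \<and>
       is_p_group p TYPE('b) \<and> infinite_exponent TYPE('b)
       \<longrightarrow> (\<forall>f::'a \<Rightarrow> 'b. fdeg f < \<infinity>) \<and> delta_AB TYPE('a) TYPE('b) = \<infinity>)"
proof (intro conjI impI allI)
  fix b :: 'b
  assume "infinite (UNIV :: 'a set)" "b \<noteq> 0"
  thus "fdeg (delta_fun (0::'a) b) = \<infinity>" by (rule fdeg_delta_fun_infinite_if_infinite)
next
  assume "infinite (UNIV :: 'a set)"
  thus "delta_AB TYPE('a) TYPE('b) = \<infinity>"
    using ntB fdeg_delta_fun_infinite_if_infinite delta_AB_infinite_if_fdeg by blast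
next
  assume "\<nexists>p. prime p \<and> finite (UNIV :: 'a set) \<and> is_p_group p TYPE('a) \<and> is_p_group p TYPE('b)"
  then obtain b :: 'b where "fdeg (delta_fun (0::'a) b) = \<infinity>"
    using exists_fdeg_delta_fun_infinite[OF ntA ntB] by blast
  thus "\<exists>b::'b. fdeg (delta_fun (0::'a) b) = \<infinity>" and "delta_AB TYPE('a) TYPE('b) = \<infinity>"
    by (auto intro: delta_AB_infinite_if_fdeg)
qed (use ntA ntB delta_AB_finite_exponent fdeg_less_infinity_p_groups delta_AB_infinite_exponent in blast)+

end
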